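(* Let $G=(V,E,\omega)$ have all its edge weights in a unital subring $\mathbb{U}\subseteq\mathbb{W}$, let $S=\{v_1,\dots,v_m\}\in st_0(G)$, and suppose each vertex of $G$ lies on a branch in $\mathcal{B}_S(G)$ (so that $\mathcal{L}_S(G)$ is defined). Then $G$ and $\mathcal{L}_S(G)$ are spectrally equivalent and have the same nonzero spectrum. Moreover, if $|G|>m+\sum_{j=1}^m(|\beta^j|-2)$ then $\mathcal{L}_S(G)$ is a reduction of $G$ over $\mathbb{U}$; otherwise it is an expansion of $G$ over $\mathbb{U}$.
   Context: Let $\mathbb{W}$ be the field of rational functions in a complex variable $\lambda$ with complex coefficients; a unital subring is a subring containing $1$. A graph $G=(V,E,\omega)$ is a finite directed graph with vertex set $V$, edges $E$ (loops allowed, at most one edge from a vertex to another), weights $\omega:E\to\mathbb{W}\setminus\{0\}$ (weight $0$ for non-edges); $M(G)_{ij}=\omega(e_{ij})$; $|G|$ = number of vertices; the weight set is $\omega(E)$. The spectrum $\sigma(G)$ is the list of roots, with multiplicity, of the numerator of $\det(M(G)-\lambda I)$ written in lowest terms; "nonzero spectrum" means this list with all zeros removed. $\bar S=V\setminus S$; $\ell(G)$ is $G$ without loops. A path is a sequence of distinct vertices $u_1,\dots,u_k$ ($k\ge2$) with edges $u_t\to u_{t+1}$; a cycle is the same with $u_1=u_k$, $u_1,\dots,u_{k-1}$ distinct; $u_2,\dots,u_{k-1}$ are interior; $|\beta|=k$. A nonempty $S\subseteq V$ is a structural set ($S\in st(G)$) if $\ell(G)|_{\bar S}$ has no cycles and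 $\omega(e_{ii})\ne\lambda$ for $v_i\in\bar S$; $st_0(G)$ consists of those $S\in st(G)$ with $\omega(e_{ii})=0$ for all $v_i\in\bar S$. $\mathcal{B}_{ij}(G;S)$ is the set of paths or cycles from $v_i\in S$ to $v_j\in S$ with no interior vertex in $S$ (branches); $\mathcal{B}_S(G)$ is their union. $\mathcal{P}_\omega(u_1,\dots,u_k)=\omega(u_1u_2)\prod_{t=2}^{k-1}\frac{\omega(u_tu_{t+1})}{\lambda-\omega(u_tu_t)}$; $\mathcal{R}_S(G)$ is the graph on $S$ with an edge $v_i\to v_j$ iff $\mathcal{B}_{ij}(G;S)\ne\emptyset$, weight $\sum_{\beta\in\mathcal{B}_{ij}(G;S)}\mathcal{P}_\omega(\beta)$. Graphs $G,H$ are spectrally equivalent if $\mathcal{R}_S(G)=\mathcal{R}_T(H)$ for some $S\in st(G)$, $T\in st(H)$. If $G,H$ are spectrally equivalent with weight sets in $\mathbb{U}$, then $H$ is a reduction of $G$ over $\mathbb{U}$ if $|H|<|G|$ and an expansion of $G$ over $\mathbb{U}$ if $|H|\ge|G|$. $\mathcal{L}$-construction: for $S=\{v_1,\dots,v_m\}\in st_0(G)$ with every vertex of $G$ on a branch, for each $j$ choose a branch $\beta^j$ ending at $v_j$ of maximal length $|\beta^j|$ among branches in $\bigcup_i\mathcal{B}_{ij}(G;S)$. Build a graph $\tilde{\mathcal{X}}$ consisting of the vertices of $S$ together with, for each $j$, a separate new copy of the interior vertices of $\beta^j$ (pairwise disjoint for different $j$), forming a path $\beta^j_{\ell_j},\beta^j_{\ell_j-1},\dots,\beta^j_0$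 where $\ell_j=|\beta^j|-1$, $\beta^j_{\ell_j}\in S$ is the starting vertex of $\beta^j$ and $\beta^j_0=v_j$; give the edge $\beta^j_{\ell_j}\to\beta^j_{\ell_j-1}$ weight $\lambda^{|\beta^j|-2}\mathcal{P}_\omega(\beta^j)$ and all other edges of these paths weight $1$. Then, for each other branch $\gamma\in\mathcal{B}_{ij}(G;S)$, $\gamma\neq\beta^j$, add an edge from $v_i$ to $\beta^j_{|\gamma|-2}$ of weight $\lambda^{|\gamma|-2}\mathcal{P}_\omega(\gamma)$; parallel edges thus created are merged into one edge whose weight is the sum. The result is $\mathcal{L}_S(G)$; it has $m+\sum_{j}(|\beta^j|-2)$ vertices. *)

theory Defs
  imports "HOL-Computational_Algebra.Polynomial_Factorial"
          "HOL-Computational_Algebra.Normalized_Fraction"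
          "HOL-Computational_Algebra.Field_as_Ring"
          "HOL-Combinatorics.Permutations"
          "HOL-Library.Multiset"
begin

type_synonym rf = "complex poly fract"

definition lam :: rf where "lam = to_fract [:0, 1:]"

definition unital_subring :: "rf set \<Rightarrow> bool" where
  "unital_subring U \<longleftrightarrow> 1 \<in> U \<and> (\<forall>a\<in>U. \<forall>b\<in>U. a + b \<in> U \<and> a * b \<in> U \<and> - a \<in> U)"

record 'v graph =
  verts :: "'v set"
  arcs :: "('v \<times> 'v) set"
  wt :: "'v \<Rightarrow> 'v \<Rightarrow> rf"

definition wf_graph :: "('v, 'b) graph_scheme \<Rightarrow> bool" where
  "wf_graph G \<longleftrightarrow> finite (verts G) \<and> arcs G \<subseteq> verts G \<times> verts G
     \<and> (\<forall>i j. (i, j) \<in> arcs G \<longleftrightarrow> wt G i j \<noteq> 0)"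

definition weight_set :: "('v, 'b) graph_scheme \<Rightarrow> rf set" where
  "weight_set G = {wt G i j | i j. (i, j) \<in> arcs G}"

definition char_det :: "('v, 'b) graph_scheme \<Rightarrow> rf" where
  "char_det G = (\<Sum>p \<in> {p. p permutes verts G}. of_int (sign p) *
       (\<Prod>i \<in> verts G. wt G i (p i) - (if p i = i then lam else 0)))"

definition roots_mset :: "complex poly \<Rightarrow> complex multiset" where
  "roots_mset p = (\<Sum>x \<in> {x. poly p x = 0}. replicate_mset (order x p) x)"

definition spectrum_graph :: "('v, 'b) graph_scheme \<Rightarrow> complex multiset" where
  "spectrum_graph G = roots_mset (fst (quot_of_fract (char_det G)))"

definition nonzero_spectrum :: "('v, 'b) graph_scheme \<Rightarrow> complex multiset" where
  "nonzero_spectrum G = filter_mset (\<lambda>x. x \<noteq> 0) (spectrum_graph G)"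

definition is_edge :: "('v, 'b) graph_scheme \<Rightarrow> 'v \<Rightarrow> 'v \<Rightarrow> bool" where
  "is_edge G a b \<longleftrightarrow> (a, b) \<in> arcs G"

definition consec_edges :: "('v, 'b) graph_scheme \<Rightarrow> 'v list \<Rightarrow> bool" where
  "consec_edges G us \<longleftrightarrow> (\<forall>t. Suc t < length us \<longrightarrow> is_edge G (us ! t) (us ! Suc t))"

definition is_path :: "('v, 'b) graph_scheme \<Rightarrow> 'v list \<Rightarrow> bool" where
  "is_path G us \<longleftrightarrow> 2 \<le> length us \<and> distinct us \<and> set us \<subseteq> verts G \<and> consec_edges G us"

definition is_cycle :: "('v, 'b) graph_scheme \<Rightarrow> 'v list \<Rightarrow> bool" where
  "is_cycle G us \<longleftrightarrow> 2 \<le> length us \<and> hd us = last us \<and> distinct (butlast us)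
      \<and> set us \<subseteq> verts G \<and> consec_edges G us"

definition interior :: "'v list \<Rightarrow> 'v set" where
  "interior us = set (butlast (tl us))"

definition branches :: "('v, 'b) graph_scheme \<Rightarrow> 'v set \<Rightarrow> 'v \<Rightarrow> 'v \<Rightarrow> 'v list set" where
  "branches G S i j = {us. (is_path G us \<or> is_cycle G us) \<and> i \<in> S \<and> j \<in> S
      \<and> hd us = i \<and> last us = j \<and> interior us \<inter> S = {}}"

definition all_branches :: "('v, 'b) graph_scheme \<Rightarrow> 'v set \<Rightarrow> 'v list set" where
  "all_branches G S = (\<Union>i \<in> S. \<Union>j \<in> S. branches G S i j)"

definition path_weight :: "('v, 'b) graph_scheme \<Rightarrow> 'v list \<Rightarrow> rf" where
  "path_weight G us = wt G (us ! 0) (us ! 1) *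
     (\<Prod>t \<in> {1..<length us - 1}. wt G (us ! t) (us ! Suc t) / (lam - wt G (us ! t) (us ! t)))"

definition st :: "('v, 'b) graph_scheme \<Rightarrow> 'v set \<Rightarrow> bool" where
  "st G S \<longleftrightarrow> S \<noteq> {} \<and> S \<subseteq> verts G
     \<and> \<not> (\<exists>us. is_cycle G us \<and> 3 \<le> length us \<and> set us \<subseteq> verts G - S)
     \<and> (\<forall>i \<in> verts G - S. wt G i i \<noteq> lam)"

definition st0 :: "('v, 'b) graph_scheme \<Rightarrow> 'v set \<Rightarrow> bool" where
  "st0 G S \<longleftrightarrow> st G S \<and> (\<forall>i \<in> verts G - S. wt G i i = 0)"

definition isored :: "('v, 'b) graph_scheme \<Rightarrow> 'v set \<Rightarrow> 'v graph" where
  "isored G S =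
     \<lparr> verts = S,
       arcs = {(i, j). i \<in> S \<and> j \<in> S \<and> branches G S i j \<noteq> {}},
       wt = (\<lambda>i j. if i \<in> S \<and> j \<in> S \<and> branches G S i j \<noteq> {}
                    then (\<Sum>\<beta> \<in> branches G S i j. path_weight G \<beta>) else 0) \<rparr>"

definition spec_equiv :: "'v graph \<Rightarrow> 'v graph \<Rightarrow> bool" where
  "spec_equiv G H \<longleftrightarrow> (\<exists>S T. st G S \<and> st H T \<and> isored G S = isored H T)"

definition is_reduction :: "rf set \<Rightarrow> 'v graph \<Rightarrow> 'v graph \<Rightarrow> bool" where
  "is_reduction U G H \<longleftrightarrow> spec_equiv G H \<and> weight_set G \<subseteq> U \<and> weight_set H \<subseteq> U
      \<and> card (verts H) < card (verts G)"

definition is_expansion :: "rf set \<Rightarrow> 'v graph \<Rightarrow> 'v graph \<Rightarrow> bool" where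
  "is_expansion U G H \<longleftrightarrow> spec_equiv G H \<and> weight_set G \<subseteq> U \<and> weight_set H \<subseteq> U
      \<and> card (verts H) \<ge> card (verts G)"

text \<open>Copy of G on the vertex type 'v + ('v * nat) (vertices tagged Inl).\<close>
definition lift_graph :: "'v graph \<Rightarrow> ('v + 'v \<times> nat) graph" where
  "lift_graph G =
     \<lparr> verts = Inl ` verts G,
       arcs = (\<lambda>(a, b). (Inl a, Inl b)) ` arcs G,
       wt = (\<lambda>x y. case (x, y) of (Inl a, Inl b) \<Rightarrow> wt G a b | _ \<Rightarrow> 0) \<rparr>"

definition max_branch_choice :: "'v graph \<Rightarrow> 'v set \<Rightarrow> ('v \<Rightarrow> 'v list) \<Rightarrow> bool" where
  "max_branch_choice G S beta \<longleftrightarrow>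
     (\<forall>j \<in> S. beta j \<in> (\<Union>i \<in> S. branches G S i j)
        \<and> (\<forall>i \<in> S. \<forall>\<gamma> \<in> branches G S i j. length \<gamma> \<le> length (beta j)))"

text \<open>Vertex beta^j_k of the path beta^j_(l_j), ..., beta^j_0 with l_j = |beta^j| - 1:
  beta^j_0 = v_j, beta^j_(l_j) = start of beta^j, interior copies are the new vertices Inr (j, k).\<close>
definition Lnode :: "('v \<Rightarrow> 'v list) \<Rightarrow> 'v \<Rightarrow> nat \<Rightarrow> 'v + 'v \<times> nat" where
  "Lnode beta j k = (if k = 0 then Inl j
                     else if k = length (beta j) - 1 then Inl (hd (beta j)) else Inr (j, k))"

definition Lpath_arc :: "'v set \<Rightarrow> ('v \<Rightarrow> 'v list) \<Rightarrow> 'v \<Rightarrow> nat \<Rightarrow> bool" where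
  "Lpath_arc S beta j k \<longleftrightarrow> j \<in> S \<and> k < length (beta j) - 1"

definition Lcon :: "'v graph \<Rightarrow> 'v set \<Rightarrow> ('v \<Rightarrow> 'v list) \<Rightarrow> ('v + 'v \<times> nat) graph" where
  "Lcon G S beta =
    (let A = {(x, y). (\<exists>j k. Lpath_arc S beta j k \<and> x = Lnode beta j (Suc k) \<and> y = Lnode beta j k)
                  \<or> (\<exists>j \<in> S. \<exists>i \<in> S. \<exists>\<gamma> \<in> branches G S i j - {beta j}.
                        x = Inl i \<and> y = Lnode beta j (length \<gamma> - 2))};
         W = (\<lambda>x y.
              (\<Sum>j \<in> S. \<Sum>k \<in> {0..<length (beta j) - 1}.
                  if x = Lnode beta j (Suc k) \<and> y = Lnode beta j k
                  then (if Suc k = length (beta j) - 1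
                        then lam ^ (length (beta j) - 2) * path_weight G (beta j) else 1)
                  else 0)
            + (\<Sum>j \<in> S. \<Sum>i \<in> S. \<Sum>\<gamma> \<in> branches G S i j - {beta j}.
                  if x = Inl i \<and> y = Lnode beta j (length \<gamma> - 2)
                  then lam ^ (length \<gamma> - 2) * path_weight G \<gamma> else 0))
     in \<lparr> verts = Inl ` S \<union> {Inr (j, k) | j k. j \<in> S \<and> 1 \<le> k \<and> k < length (beta j) - 1},
          arcs = A,
          wt = (\<lambda>x y. if (x, y) \<in> A then W x y else 0) \<rparr>)"

end

theory Submission
  imports Defs "Jordan_Normal_Form.Determinant" "HOL-Library.Transitive_Closure_Table"
begin

text \<open>
  Deleting a loopless vertex \<open>v\<close> from \<open>M - \<lambda>I\<close> by one step of Gaussian elimination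
  multiplies the determinant by \<open>-\<lambda>\<close> and turns the weights into
  \<open>w\<^sub>a\<^sub>b + w\<^sub>a\<^sub>v w\<^sub>v\<^sub>b / \<lambda>\<close>. If \<open>v \<notin> T\<close> is a source of the acyclic
  graph \<open>\<ell>(G)\<close> on \<open>V - T\<close>, the new weights of the branches between vertices of \<open>T\<close> are the old
  ones plus those of the branches entering \<open>V - T\<close> at \<open>v\<close>. Eliminating all of \<open>V - T\<close> source
  by source gives \<open>det (M(G) - \<lambda>I) = (-\<lambda>)\<^bsup>|V - T|\<^esup> det (M(R\<^sub>T(G)) - \<lambda>I)\<close>, so spectrally
  equivalent graphs whose structural sets have loopless complements share their nonzero spectrum.

  In \<open>\<L>\<^sub>S(G)\<close> a branch from \<open>v\<^sub>i\<close> to \<open>v\<^sub>j\<close> is an arc from \<open>v\<^sub>i\<close> into the path built for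
  \<open>\<beta>\<^sup>j\<close>, followed by that path. The arc into \<open>\<beta>\<^sup>j\<^sub>k\<close> carries \<open>\<lambda>\<^sup>k\<close> times the total
  weight of the branches of \<open>G\<close> of length \<open>k + 2\<close>, and the \<open>k\<close> loopless interior vertices of
  the path divide by \<open>\<lambda>\<^sup>k\<close> again. Hence \<open>R\<^sub>S(\<L>\<^sub>S(G)) = R\<^sub>S(G)\<close>.
\<close>

definition char_entry :: "('a \<Rightarrow> 'a \<Rightarrow> rf) \<Rightarrow> 'a \<Rightarrow> 'a \<Rightarrow> rf" where
  "char_entry w x y = w x y - (if x = y then lam else 0)"

definition char_det_on :: "'a set \<Rightarrow> ('a \<Rightarrow> 'a \<Rightarrow> rf) \<Rightarrow> rf" where
  "char_det_on V w = (\<Sum>p \<in> {p. p permutes V}. of_int (sign p) * (\<Prod>x \<in> V. char_entry w x (p x)))"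

lemma char_det_eq_char_det_on: "char_det G = char_det_on (verts G) (wt G)"
  unfolding char_det_def char_det_on_def char_entry_def
  by (intro sum.cong refl arg_cong2[where f="(*)"] prod.cong) auto

lemma char_det_on_cong:
  assumes "\<And>x y. x \<in> V \<Longrightarrow> y \<in> V \<Longrightarrow> w x y = w' x y"
  shows "char_det_on V w = char_det_on V w'"
  unfolding char_det_on_def char_entry_def
  by (intro sum.cong refl arg_cong2[where f="(*)"] prod.cong) (auto simp: assms permutes_in_image)

lemma char_det_on_eq_det:
  assumes f: "bij_betw f {0..<n} V"
  shows "char_det_on V w = det (mat n n (\<lambda>(i, j). char_entry w (f i) (f j)))"
proof -
  define \<phi> where "\<phi> = (\<lambda>q x. if x \<in> V then f (q (inv_into {0..<n} f x)) else x)"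
  have bij: "bij_betw \<phi> {q. q permutes {0..<n}} {p. p permutes V}"
    unfolding \<phi>_def by (rule bij_betw_permutations[OF f])
  have "char_det_on V w =
      (\<Sum>q | q permutes {0..<n}. of_int (sign (\<phi> q)) * (\<Prod>x \<in> V. char_entry w x (\<phi> q x)))"
    unfolding char_det_on_def by (rule sum.reindex_bij_betw[OF bij, symmetric])
  also have "\<dots> = (\<Sum>q | q permutes {0..<n}.
      of_int (sign q) * (\<Prod>i \<in> {0..<n}. char_entry w (f i) (f (q i))))"
  proof (intro sum.cong refl)
    fix q assume q: "q \<in> {q. q permutes {0..<n}}"
    have "permutes_bij_finite q {0..<n} V f (inv_into {0..<n} f)"
      unfolding permutes_bij_finite_def permutes_bij_def permutes_bij_finite_axioms_def
      using q f by (auto simp: bij_betw_inv_into_left)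
    then have "sign (\<phi> q) = sign q"
      unfolding \<phi>_def by (rule permutes_bij_finite.sign_p')
    moreover have "(\<Prod>x \<in> V. char_entry w x (\<phi> q x)) = (\<Prod>i \<in> {0..<n}. char_entry w (f i) (f (q i)))"
      using f q unfolding prod.reindex_bij_betw[OF f, symmetric]
      by (intro prod.cong refl)
         (auto simp: \<phi>_def bij_betw_inv_into_left bij_betw_apply permutes_in_image)
    ultimately show "of_int (sign (\<phi> q)) * (\<Prod>x \<in> V. char_entry w x (\<phi> q x)) =
        of_int (sign q) * (\<Prod>i \<in> {0..<n}. char_entry w (f i) (f (q i)))" by simp
  qed
  also have "\<dots> = det (mat n n (\<lambda>(i, j). char_entry w (f i) (f j)))"
    unfolding det_def'[OF mat_carrier]
    by (intro sum.cong refl arg_cong2[where f="(*)"] prod.cong) (auto simp: permutes_in_image)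
  finally show ?thesis .
qed

lemma det_pivot_Schur_complement:
  fixes A :: "'a::field mat"
  assumes A: "A \<in> carrier_mat (Suc n) (Suc n)" and d: "A $$ (0, 0) \<noteq> 0"
  shows "det A = A $$ (0, 0) * det (mat n n (\<lambda>(i, j).
    A $$ (Suc i, Suc j) - A $$ (Suc i, 0) * A $$ (0, Suc j) / A $$ (0, 0)))"
    (is "_ = _ * det ?D")
proof -
  define c where "c = (\<lambda>i. - A $$ (i, 0) / A $$ (0, 0))"
  define E where "E = mat (Suc n) (Suc n)
    (\<lambda>(i, j). (if i = j then 1 else 0) + (if j = 0 \<and> i \<noteq> 0 then c i else 0))"
  have E: "E \<in> carrier_mat (Suc n) (Suc n)" unfolding E_def by simp
  have "det E = prod_list (diag_mat E)"
    by (rule det_lower_triangular[OF _ E]) (auto simp: E_def)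
  also have "\<dots> = 1"
    unfolding prod_list_diag_prod by (rule prod.neutral) (auto simp: E_def)
  finally have detE: "det E = 1" .
  have EA: "(E * A) $$ (i, j) = A $$ (i, j) + (if i \<noteq> 0 then c i * A $$ (0, j) else 0)"
    if "i < Suc n" "j < Suc n" for i j
  proof -
    have "(E * A) $$ (i, j) = (\<Sum>k \<in> {0..<Suc n}. E $$ (i, k) * A $$ (k, j))"
      using that A E by (simp add: scalar_prod_def)
    also have "\<dots> = (\<Sum>k \<in> {0..<Suc n}.
        (if i = k then A $$ (k, j) else 0) + (if k = 0 \<and> i \<noteq> 0 then c i * A $$ (k, j) else 0))"
      using that by (intro sum.cong refl) (auto simp: E_def algebra_simps)
    finally show ?thesis using that by (simp add: sum.distrib)
  qed
  have EA_block: "E * A = four_block_mat (mat 1 1 (\<lambda>_. A $$ (0, 0))) (mat 1 n (\<lambda>(_, j). A $$ (0, Suc j)))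
      (0\<^sub>m n 1) ?D" (is "_ = ?B")
  proof (rule eq_matI)
    fix i j assume "i < dim_row ?B" "j < dim_col ?B"
    then have ij: "i < Suc n" "j < Suc n" by auto
    show "(E * A) $$ (i, j) = ?B $$ (i, j)"
      unfolding EA[OF ij] using ij d by (cases i; cases j) (auto simp: c_def field_simps)
  qed (use A E in auto)
  have "det (E * A) = det (mat 1 1 (\<lambda>_. A $$ (0, 0))) * det ?D"
    unfolding EA_block by (rule det_four_block_mat_lower_left_zero_col) auto
  then have "det (E * A) = A $$ (0, 0) * det ?D"
    by (simp add: det_single)
  moreover have "det (E * A) = det A"
    using det_mult[OF E A] detE by simp
  ultimately show ?thesis by simp
qed

lemma lam_neq_0: "lam \<noteq> 0"
  unfolding lam_def by simp

definition eliminate :: "('a \<Rightarrow> 'a \<Rightarrow> rf) \<Rightarrow> 'a \<Rightarrow> 'a \<Rightarrow> 'a \<Rightarrow> rf" where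
  "eliminate w v = (\<lambda>a b. w a b - w a v * w v b / (w v v - lam))"

lemma char_det_on_eliminate:
  assumes V: "finite V" "v \<in> V" and d: "w v v \<noteq> lam"
  shows "char_det_on V w = (w v v - lam) * char_det_on (V - {v}) (eliminate w v)"
proof -
  define n where "n = card V - 1"
  have "card V = Suc n"
    using V card_gt_0_iff[of V] by (auto simp: n_def)
  then obtain h where h: "bij_betw h {0..<Suc n} V"
    using ex_bij_betw_nat_finite[OF V(1)] by metis
  define f where "f = transpose v (h 0) \<circ> h"
  have f: "bij_betw f {0..<Suc n} V"
    unfolding f_def using h V bij_betw_apply[OF h, of 0] by (intro bij_betw_trans) auto
  have f0: "f 0 = v" by (simp add: f_def)
  have "bij_betw f ({0..<Suc n} - {0}) (V - {v})"
    using f f0 V by (intro bij_betw_DiffI) auto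
  moreover have "bij_betw Suc {0..<n} ({0..<Suc n} - {0})"
    by (auto simp: image_iff less_Suc_eq_0_disj)
  ultimately have g: "bij_betw (f \<circ> Suc) {0..<n} (V - {v})"
    by (intro bij_betw_trans)
  define M where "M = mat (Suc n) (Suc n) (\<lambda>(i, j). char_entry w (f i) (f j))"
  have fSuc: "f (Suc i) \<noteq> v" "v \<noteq> f (Suc i)" if "i < n" for i
    using bij_betw_apply[OF g, of i] that by auto
  have "char_det_on V w = det M"
    unfolding M_def by (rule char_det_on_eq_det[OF f])
  also have "\<dots> = M $$ (0, 0) * det (mat n n (\<lambda>(i, j).
      M $$ (Suc i, Suc j) - M $$ (Suc i, 0) * M $$ (0, Suc j) / M $$ (0, 0)))"
    by (rule det_pivot_Schur_complement) (auto simp: M_def char_entry_def d f0)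
  also have "mat n n (\<lambda>(i, j). M $$ (Suc i, Suc j) - M $$ (Suc i, 0) * M $$ (0, Suc j) / M $$ (0, 0))
      = mat n n (\<lambda>(i, j). char_entry (eliminate w v) ((f \<circ> Suc) i) ((f \<circ> Suc) j))"
    by (rule eq_matI) (auto simp: M_def char_entry_def eliminate_def f0 fSuc)
  also have "det \<dots> = char_det_on (V - {v}) (eliminate w v)"
    by (rule char_det_on_eq_det[OF g, symmetric])
  finally show ?thesis by (simp add: M_def char_entry_def f0)
qed

fun walk_weight :: "('a \<Rightarrow> 'a \<Rightarrow> rf) \<Rightarrow> 'a list \<Rightarrow> rf" where
  "walk_weight w (x # y # zs) = w x y * walk_weight w (y # zs)"
| "walk_weight w _ = 1"

definition distinct_lists :: "'a set \<Rightarrow> 'a list set" where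
  "distinct_lists A = {xs. set xs \<subseteq> A \<and> distinct xs}"

text \<open>The weight of the arc from \<open>i\<close> to \<open>j\<close> in \<open>R\<^sub>T(G)\<close>, summed over all candidate lists of
  interior vertices; those that are not walks of the graph contribute \<open>0\<close>.\<close>

definition reduced_weight :: "'a set \<Rightarrow> 'a set \<Rightarrow> ('a \<Rightarrow> 'a \<Rightarrow> rf) \<Rightarrow> 'a \<Rightarrow> 'a \<Rightarrow> rf" where
  "reduced_weight V T w i j =
    (\<Sum>xs \<in> distinct_lists (V - T). walk_weight w (i # xs @ [j]) / lam ^ length xs)"

definition support_rel :: "('a \<Rightarrow> 'a \<Rightarrow> rf) \<Rightarrow> 'a set \<Rightarrow> ('a \<times> 'a) set" where
  "support_rel w D = {(x, y). x \<in> D \<and> y \<in> D \<and> w x y \<noteq> 0}"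

lemma finite_distinct_lists: "finite A \<Longrightarrow> finite (distinct_lists A)"
  unfolding distinct_lists_def by (rule finite_subset_distinct)

lemma walk_weight_Cons: "ys \<noteq> [] \<Longrightarrow> walk_weight w (x # ys) = w x (hd ys) * walk_weight w ys"
  by (cases ys) auto

lemma walk_weight_eq_0: "w a b = 0 \<Longrightarrow> walk_weight w (as @ a # b # bs) = 0"
proof (induction as)
  case (Cons x as)
  then show ?case by (cases as) auto
qed simp

lemma walk_weight_cong:
  "(\<And>x. x \<in> set xs \<Longrightarrow> w' x = w x) \<Longrightarrow> walk_weight w' (xs @ [j]) = walk_weight w (xs @ [j])"
proof (induction xs)
  case (Cons x xs)
  then show ?case by (cases xs) auto
qed simp

lemma walk_weight_into_source:
  assumes "v \<in> set xs" "hd xs \<noteq> v" "set xs \<subseteq> D" and src: "\<forall>x \<in> D. w x v = 0"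
  shows "walk_weight w (i # xs @ [j]) = 0"
proof -
  obtain ys zs where xs: "xs = ys @ v # zs"
    using split_list[OF assms(1)] by blast
  then obtain ys' y where ys: "ys = ys' @ [y]"
    using assms(2) by (cases ys rule: rev_cases) auto
  have "w y v = 0"
    using src assms(3) by (auto simp: xs ys)
  then have "walk_weight w ((i # ys') @ y # v # (zs @ [j])) = 0"
    by (rule walk_weight_eq_0)
  then show ?thesis
    by (simp add: xs ys)
qed

lemma acyclic_support_rel_has_source:
  assumes "finite D" "D \<noteq> {}" "acyclic (support_rel w D)"
  obtains v where "v \<in> D" "\<forall>x \<in> D. w x v = 0"
proof -
  have "finite (D \<times> D)"
    using assms(1) by simp
  moreover have "support_rel w D \<subseteq> D \<times> D"
    by (auto simp: support_rel_def)
  ultimately have "finite (support_rel w D)"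
    by (rule finite_subset[rotated])
  then have wf: "wf (support_rel w D)"
    using assms(3) by (rule finite_acyclic_wf)
  show ?thesis
  proof (rule wfE_min'[OF wf assms(2)])
    fix v assume v: "v \<in> D" and min: "\<And>x. (x, v) \<in> support_rel w D \<Longrightarrow> x \<notin> D"
    have "\<forall>x \<in> D. w x v = 0"
      using min v unfolding support_rel_def by blast
    with v show ?thesis by (rule that)
  qed
qed

lemma reduced_weight_eliminate:
  assumes fin: "finite V" and v: "v \<in> V - T"
    and src: "\<forall>x \<in> V - T. w x v = 0"
  shows "reduced_weight (V - {v}) T (eliminate w v) i j = reduced_weight V T w i j"
proof -
  define D where "D = V - T"
  define F where "F = (\<lambda>xs. walk_weight w (i # xs @ [j]) / lam ^ length xs)"
  have vv: "w v v = 0" using src v by auto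
  have finD: "finite D" using fin by (simp add: D_def)
  have split: "walk_weight (eliminate w v) (i # xs @ [j]) / lam ^ length xs = F xs + F (v # xs)"
    if xs: "xs \<in> distinct_lists (D - {v})" for xs
  proof -
    have "walk_weight (eliminate w v) (xs @ [j]) = walk_weight w (xs @ [j])"
      by (rule walk_weight_cong) (use xs src in \<open>auto simp: distinct_lists_def eliminate_def D_def\<close>)
    then have "walk_weight (eliminate w v) (i # xs @ [j]) =
        walk_weight w (i # xs @ [j]) + walk_weight w (i # v # xs @ [j]) / lam"
      by (simp add: walk_weight_Cons eliminate_def vv algebra_simps)
    then show ?thesis
      unfolding F_def using lam_neq_0 by (simp add: field_simps)
  qed
  have through_v: "F xs = 0"
    if "xs \<in> distinct_lists D - distinct_lists (D - {v}) - Cons v ` distinct_lists (D - {v})" for xs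
  proof -
    from that have "v \<in> set xs" "set xs \<subseteq> D" "distinct xs"
      by (auto simp: distinct_lists_def)
    moreover have "hd xs \<noteq> v"
      using that calculation by (cases xs) (auto simp: distinct_lists_def)
    ultimately show ?thesis
      unfolding F_def using walk_weight_into_source[of v xs D w i j] src by (auto simp: D_def)
  qed
  have "V - {v} - T = D - {v}" by (auto simp: D_def)
  then have "reduced_weight (V - {v}) T (eliminate w v) i j =
      (\<Sum>xs \<in> distinct_lists (D - {v}). F xs) + (\<Sum>xs \<in> distinct_lists (D - {v}). F (v # xs))"
    unfolding reduced_weight_def sum.distrib[symmetric] by (auto intro!: sum.cong split)
  also have "(\<Sum>xs \<in> distinct_lists (D - {v}). F (v # xs)) = (\<Sum>xs \<in> Cons v ` distinct_lists (D - {v}). F xs)"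
    by (simp add: sum.reindex)
  also have "\<dots> = (\<Sum>xs \<in> distinct_lists D - distinct_lists (D - {v}). F xs)"
    using v through_v finite_distinct_lists[OF finD]
    by (intro sum.mono_neutral_left) (auto simp: distinct_lists_def D_def)
  also have "(\<Sum>xs \<in> distinct_lists (D - {v}). F xs) + \<dots> = (\<Sum>xs \<in> distinct_lists D. F xs)"
    using finite_distinct_lists[OF finD]
    by (subst add.commute, intro sum.subset_diff[symmetric]) (auto simp: distinct_lists_def)
  finally show ?thesis
    unfolding reduced_weight_def F_def D_def .
qed

lemma char_det_on_reduce:
  assumes "finite V" "T \<subseteq> V" "\<forall>x \<in> V - T. w x x = 0" "acyclic (support_rel w (V - T))"
  shows "char_det_on V w = (- lam) ^ card (V - T) * char_det_on T (reduced_weight V T w)"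
  using assms
proof (induction "card (V - T)" arbitrary: V w)
  case 0
  then have "V = T" by auto
  moreover have "distinct_lists (T - T) = {[]}" by (auto simp: distinct_lists_def)
  ultimately show ?case
    by (simp add: reduced_weight_def)
next
  case (Suc k)
  have "V - T \<noteq> {}"
    using Suc.hyps(2) by (metis card.empty nat.simps(3))
  then obtain v where v: "v \<in> V - T" and src: "\<forall>x \<in> V - T. w x v = 0"
    using finite_Diff[OF Suc.prems(1)] Suc.prems(4) by (metis acyclic_support_rel_has_source)
  have outside: "eliminate w v x = w x" if "x \<in> V - T" for x
    using src that by (auto simp: eliminate_def)
  have card: "k = card (V - {v} - T)"
    using Suc.hyps(2) v Suc.prems(1) by (simp add: Diff_insert2[symmetric] card_Diff_singleton)
  have "support_rel (eliminate w v) (V - {v} - T) \<subseteq> support_rel w (V - T)"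
    using outside by (auto simp: support_rel_def)
  then have acyc: "acyclic (support_rel (eliminate w v) (V - {v} - T))"
    using Suc.prems(4) acyclic_subset by blast
  have "char_det_on V w = (- lam) * char_det_on (V - {v}) (eliminate w v)"
    using char_det_on_eliminate[of V v w] Suc.prems v lam_neq_0 by simp
  also have "char_det_on (V - {v}) (eliminate w v) =
      (- lam) ^ card (V - {v} - T) * char_det_on T (reduced_weight (V - {v}) T (eliminate w v))"
  proof (rule Suc.hyps(1)[OF card])
    show "\<forall>x \<in> V - {v} - T. eliminate w v x x = 0"
      using outside Suc.prems(3) by simp
  qed (use Suc.prems v acyc in auto)
  also have "char_det_on T (reduced_weight (V - {v}) T (eliminate w v)) =
      char_det_on T (reduced_weight V T w)"
    using Suc.prems(1) v src by (intro char_det_on_cong reduced_weight_eliminate)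
  finally show ?case
    unfolding Suc.hyps(2)[symmetric] card by simp
qed

lemma walk_weight_eq_prod: "walk_weight w us = (\<Prod>t < length us - 1. w (us ! t) (us ! Suc t))"
proof (induction w us rule: walk_weight.induct)
  case (1 w x y zs)
  have "length (x # y # zs) - 1 = Suc (length (y # zs) - 1)" by simp
  then show ?case
    unfolding walk_weight.simps 1 by (simp only: prod.lessThan_Suc_shift) simp
qed auto

lemma walk_weight_neq_0_iff:
  "walk_weight w us \<noteq> 0 \<longleftrightarrow> (\<forall>t. Suc t < length us \<longrightarrow> w (us ! t) (us ! Suc t) \<noteq> 0)"
  unfolding walk_weight_eq_prod by (auto simp: prod_zero_iff)

lemma path_weight_eq_walk_weight:
  assumes "\<forall>x \<in> set xs. wt H x x = 0"
  shows "path_weight H (i # xs @ [j]) = walk_weight (wt H) (i # xs @ [j]) / lam ^ length xs"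
proof -
  define us where "us = i # xs @ [j]"
  have len: "length us - 1 = Suc (length xs)" by (simp add: us_def)
  have loop: "wt H (us ! t) (us ! t) = 0" if "t \<in> {1..<Suc (length xs)}" for t
  proof -
    have "us ! t = xs ! (t - 1)"
      using that by (auto simp: us_def nth_append nth_Cons split: nat.splits)
    then show ?thesis using that assms by auto
  qed
  have "path_weight H us =
      wt H (us ! 0) (us ! 1) * (\<Prod>t \<in> {1..<Suc (length xs)}. wt H (us ! t) (us ! Suc t) / lam)"
    unfolding path_weight_def len by (intro arg_cong2[where f="(*)"] refl prod.cong) (auto simp: loop)
  also have "\<dots> = (\<Prod>t \<in> insert 0 {1..<Suc (length xs)}. wt H (us ! t) (us ! Suc t)) / lam ^ length xs"
    by (simp add: prod_dividef)
  also have "insert 0 {1..<Suc (length xs)} = {..<length us - 1}"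
    unfolding len by auto
  finally show ?thesis
    unfolding walk_weight_eq_prod us_def .
qed

lemma branches_eq_image:
  assumes "T \<subseteq> verts H" "i \<in> T" "j \<in> T"
  shows "branches H T i j = (\<lambda>xs. i # xs @ [j]) `
    {xs \<in> distinct_lists (verts H - T). consec_edges H (i # xs @ [j])}"
proof (rule Set.set_eqI, rule iffI)
  fix us assume us: "us \<in> branches H T i j"
  define xs where "xs = butlast (tl us)"
  have "2 \<le> length us" "hd us = i" "last us = j"
    using us by (auto simp: branches_def is_path_def is_cycle_def)
  then have eq: "us = i # xs @ [j]"
    unfolding xs_def by (cases us) (auto simp: append_butlast_last_id)
  have "i # xs @ [j] \<in> branches H T i j"
    using us unfolding eq .
  then have "xs \<in> distinct_lists (verts H - T)" "consec_edges H (i # xs @ [j])"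
    by (auto simp: branches_def is_path_def is_cycle_def interior_def distinct_lists_def)
  then show "us \<in> (\<lambda>xs. i # xs @ [j]) ` {xs \<in> distinct_lists (verts H - T). consec_edges H (i # xs @ [j])}"
    unfolding eq by blast
next
  fix us assume "us \<in> (\<lambda>xs. i # xs @ [j]) ` {xs \<in> distinct_lists (verts H - T). consec_edges H (i # xs @ [j])}"
  then obtain xs where xs: "set xs \<subseteq> verts H - T" "distinct xs" "consec_edges H (i # xs @ [j])"
    and us: "us = i # xs @ [j]"
    by (auto simp: distinct_lists_def)
  then have "is_path H us \<or> is_cycle H us"
    using assms by (cases "i = j") (auto simp: is_path_def is_cycle_def butlast_append)
  then show "us \<in> branches H T i j"
    using xs assms by (auto simp: branches_def interior_def us)
qed

lemma sum_branches_path_weight_eq_reduced_weight: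
  assumes fin: "finite (verts H)" and T: "T \<subseteq> verts H" "i \<in> T" "j \<in> T"
    and loop: "\<forall>x \<in> verts H - T. wt H x x = 0"
    and arc: "\<forall>x y. wt H x y \<noteq> 0 \<longrightarrow> (x, y) \<in> arcs H"
  shows "(\<Sum>\<beta> \<in> branches H T i j. path_weight H \<beta>) = reduced_weight (verts H) T (wt H) i j"
proof -
  define X where "X = {xs \<in> distinct_lists (verts H - T). consec_edges H (i # xs @ [j])}"
  have "(\<Sum>\<beta> \<in> branches H T i j. path_weight H \<beta>) = (\<Sum>xs \<in> X. path_weight H (i # xs @ [j]))"
    unfolding branches_eq_image[OF T] X_def[symmetric]
    by (rule sum.reindex[unfolded comp_def]) (auto simp: inj_on_def)
  also have "\<dots> = (\<Sum>xs \<in> X. walk_weight (wt H) (i # xs @ [j]) / lam ^ length xs)"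
    by (intro sum.cong refl path_weight_eq_walk_weight) (use loop in \<open>auto simp: X_def distinct_lists_def\<close>)
  also have "\<dots> = reduced_weight (verts H) T (wt H) i j"
    unfolding reduced_weight_def
  proof (rule sum.mono_neutral_left)
    show "finite (distinct_lists (verts H - T))"
      using fin by (simp add: finite_distinct_lists)
    show "\<forall>xs \<in> distinct_lists (verts H - T) - X. walk_weight (wt H) (i # xs @ [j]) / lam ^ length xs = 0"
    proof
      fix xs assume "xs \<in> distinct_lists (verts H - T) - X"
      then have "\<not> consec_edges H (i # xs @ [j])"
        by (auto simp: X_def)
      then have "walk_weight (wt H) (i # xs @ [j]) = 0"
        using arc unfolding consec_edges_def is_edge_def
        by (subst not_not[symmetric], subst walk_weight_neq_0_iff) blast
      then show "walk_weight (wt H) (i # xs @ [j]) / lam ^ length xs = 0"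
        by simp
    qed
  qed (auto simp: X_def)
  finally show ?thesis .
qed

lemma rtrancl_path_nth:
  assumes "rtrancl_path r x xs y"
  shows "last (x # xs) = y" "Suc t < length (x # xs) \<Longrightarrow> r ((x # xs) ! t) ((x # xs) ! Suc t)"
  using assms by (induction arbitrary: t) (auto simp: nth_Cons split: nat.splits)

lemma trancl_loop_imp_simple_cycle:
  assumes "(x, x) \<in> R\<^sup>+" and irrefl: "\<forall>z. (z, z) \<notin> R"
  obtains cs where "hd cs = x" "last cs = x" "3 \<le> length cs" "distinct (butlast cs)"
    "\<forall>t. Suc t < length cs \<longrightarrow> (cs ! t, cs ! Suc t) \<in> R"
proof -
  from assms(1) obtain y where xy: "(x, y) \<in> R" and "(y, x) \<in> R\<^sup>*"
    by (blast dest: tranclD)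
  then have "(\<lambda>a b. (a, b) \<in> R)\<^sup>*\<^sup>* y x"
    by (simp add: rtrancl_def)
  then obtain ys where "rtrancl_path (\<lambda>a b. (a, b) \<in> R) y ys x"
    unfolding rtranclp_eq_rtrancl_path by blast
  then obtain ys' where path: "rtrancl_path (\<lambda>a b. (a, b) \<in> R) y ys' x" and dist: "distinct (y # ys')"
    by (rule rtrancl_path_distinct)
  have "ys' \<noteq> []"
    using rtrancl_path_nth(1)[OF path] xy irrefl by auto
  moreover have "rtrancl_path (\<lambda>a b. (a, b) \<in> R) x (y # ys') x"
    using xy path by (rule rtrancl_path.step)
  moreover have "distinct (butlast (y # ys') @ [x])"
    using dist rtrancl_path_nth(1)[OF path] by (metis append_butlast_last_id list.distinct(1))
  ultimately show thesis
    using rtrancl_path_nth[of _ x "y # ys'" x] rtrancl_path_nth(1)[OF path]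
    by (intro that[of "x # y # ys'"]) (auto simp: Suc_le_eq)
qed

lemma acyclic_support_rel_if_st:
  assumes st: "st H T" and loop: "\<forall>x \<in> verts H - T. wt H x x = 0"
    and arc: "\<forall>x y. wt H x y \<noteq> 0 \<longrightarrow> (x, y) \<in> arcs H"
  shows "acyclic (support_rel (wt H) (verts H - T))"
proof (rule acyclicI, intro allI notI)
  fix x assume "(x, x) \<in> (support_rel (wt H) (verts H - T))\<^sup>+"
  moreover have "\<forall>z. (z, z) \<notin> support_rel (wt H) (verts H - T)"
    using loop by (auto simp: support_rel_def)
  ultimately obtain cs where cs: "hd cs = x" "last cs = x" "3 \<le> length cs" "distinct (butlast cs)"
    and steps: "\<forall>t. Suc t < length cs \<longrightarrow> (cs ! t, cs ! Suc t) \<in> support_rel (wt H) (verts H - T)"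
    by (rule trancl_loop_imp_simple_cycle)
  have "set cs \<subseteq> verts H - T"
  proof
    fix z assume "z \<in> set cs"
    then obtain t where "t < length cs" "z = cs ! t"
      by (auto simp: in_set_conv_nth)
    then show "z \<in> verts H - T"
      using steps[rule_format, of 0] steps[rule_format, of "t - 1"] cs(3)
      by (cases t) (auto simp: support_rel_def)
  qed
  moreover have "consec_edges H cs"
    using steps arc by (auto simp: consec_edges_def is_edge_def support_rel_def)
  ultimately have "is_cycle H cs"
    using cs by (auto simp: is_cycle_def)
  then show False
    using st cs(3) \<open>set cs \<subseteq> verts H - T\<close> by (auto simp: st_def)
qed

lemma verts_isored [simp]: "verts (isored H T) = T"
  by (simp add: isored_def)

lemma char_det_eq_char_det_isored:
  assumes fin: "finite (verts H)" and st: "st H T"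
    and loop: "\<forall>x \<in> verts H - T. wt H x x = 0"
    and arc: "\<forall>x y. wt H x y \<noteq> 0 \<longrightarrow> (x, y) \<in> arcs H"
  shows "char_det H = (- lam) ^ card (verts H - T) * char_det (isored H T)"
proof -
  have T: "T \<subseteq> verts H"
    using st by (simp add: st_def)
  have "char_det H = (- lam) ^ card (verts H - T) * char_det_on T (reduced_weight (verts H) T (wt H))"
    unfolding char_det_eq_char_det_on
    using fin T loop acyclic_support_rel_if_st[OF st loop arc] by (rule char_det_on_reduce)
  also have "char_det_on T (reduced_weight (verts H) T (wt H)) = char_det (isored H T)"
    unfolding char_det_eq_char_det_on verts_isored
  proof (rule char_det_on_cong)
    fix x y assume "x \<in> T" "y \<in> T"
    then show "reduced_weight (verts H) T (wt H) x y = wt (isored H T) x y"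
      using sum_branches_path_weight_eq_reduced_weight[OF fin T \<open>x \<in> T\<close> \<open>y \<in> T\<close> loop arc]
      by (auto simp: isored_def)
  qed
  finally show ?thesis .
qed

lemma to_fract_power: "to_fract (p ^ n) = to_fract p ^ n"
  by (induction n) simp_all

lemma count_roots_mset: "q \<noteq> 0 \<Longrightarrow> count (roots_mset q) x = order x q"
  unfolding roots_mset_def count_sum
  using poly_roots_finite[of q] order_0I[of q x] by (simp add: count_replicate_mset sum.delta')

lemma coprime_imp_no_common_root:
  assumes "coprime a b" "poly a x = 0" "poly b x = 0"
  shows False
proof -
  have "[:- x, 1:] dvd a" "[:- x, 1:] dvd b"
    using assms poly_eq_0_iff_dvd by blast+
  then have "is_unit [:- x, 1:]"
    using coprime_common_divisor assms(1) by blast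
  then show False
    by (simp add: is_unit_poly_iff)
qed

lemma order_fst_quot_of_fract_mult:
  fixes g :: rf and p :: "complex poly"
  assumes p: "poly p x \<noteq> 0" and g: "g \<noteq> 0"
  shows "order x (fst (quot_of_fract (to_fract p * g))) = order x (fst (quot_of_fract g))"
proof -
  obtain n d where nd: "quot_of_fract g = (n, d)" by (cases "quot_of_fract g")
  obtain n' d' where nd': "quot_of_fract (to_fract p * g) = (n', d')"
    by (cases "quot_of_fract (to_fract p * g)")
  have "p \<noteq> 0" using p by auto
  then have "to_fract p * g \<noteq> 0" using g by simp
  then have nz: "d \<noteq> 0" "d' \<noteq> 0" "n \<noteq> 0" "n' \<noteq> 0"
    using g nd nd' snd_quot_of_fract_nonzero fst_quot_of_fract_eq_0_iff by (metis fst_conv snd_conv)+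
  have cop: "coprime n d" "coprime n' d'"
    using coprime_quot_of_fract nd nd' by (metis fst_conv snd_conv)+
  have "g = Fract n d"
    using Fract_quot_of_fract[of g] nd by simp
  moreover have "to_fract p * g = Fract n' d'"
    using Fract_quot_of_fract[of "to_fract p * g"] nd' by simp
  ultimately have "Fract n' d' = Fract (p * n) d"
    by (simp add: to_fract_def)
  then have "n' * d = p * n * d'"
    using eq_fract(1)[OF nz(2,1)] by simp
  then have "order x n' + order x d = order x p + order x n + order x d'"
    using nz \<open>p \<noteq> 0\<close> by (metis order_mult mult_eq_0_iff)
  then have "order x n' + order x d = order x n + order x d'"
    using order_0I[OF p] by simp
  moreover have "order x n = 0 \<or> order x d = 0" "order x n' = 0 \<or> order x d' = 0"
    using coprime_imp_no_common_root[OF cop(1), of x] coprime_imp_no_common_root[OF cop(2), of x]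
      order_gt_0_iff nz by blast+
  ultimately have "order x n' = order x n" by auto
  then show ?thesis
    using nd nd' by simp
qed

lemma nonzero_spectrum_eq_if_char_det_eq:
  assumes "char_det H1 = (- lam) ^ a * X" "char_det H2 = (- lam) ^ b * X"
  shows "nonzero_spectrum H1 = nonzero_spectrum H2"
proof -
  have "count (roots_mset (fst (quot_of_fract ((- lam) ^ a * X)))) x =
      count (roots_mset (fst (quot_of_fract X))) x" if "x \<noteq> 0" for x :: complex and a
  proof (cases "X = 0")
    case False
    have "(- lam) ^ a = to_fract ((- [:0, 1:]) ^ a)"
      by (simp only: lam_def to_fract_power to_fract_uminus)
    moreover have "poly ((- [:0, 1:]) ^ a) x \<noteq> 0"
      using that by simp
    ultimately show ?thesis
      using order_fst_quot_of_fract_mult[of "(- [:0, 1:]) ^ a" x X] False lam_neq_0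
      by (simp add: count_roots_mset)
  qed simp
  then show ?thesis
    unfolding nonzero_spectrum_def spectrum_graph_def assms
    by (intro multiset_eqI) simp
qed

lemma nonzero_spectrum_eq_if_isored_eq:
  assumes "finite (verts H1)" "st H1 T1" "\<forall>x \<in> verts H1 - T1. wt H1 x x = 0"
    "\<forall>x y. wt H1 x y \<noteq> 0 \<longrightarrow> (x, y) \<in> arcs H1"
  assumes "finite (verts H2)" "st H2 T2" "\<forall>x \<in> verts H2 - T2. wt H2 x x = 0"
    "\<forall>x y. wt H2 x y \<noteq> 0 \<longrightarrow> (x, y) \<in> arcs H2"
  assumes "isored H1 T1 = isored H2 T2"
  shows "nonzero_spectrum H1 = nonzero_spectrum H2"
  using char_det_eq_char_det_isored[OF assms(1-4)] char_det_eq_char_det_isored[OF assms(5-8)] assms(9)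
  by (intro nonzero_spectrum_eq_if_char_det_eq) auto

lemma lift_graph_simps [simp]:
  "verts (lift_graph G) = Inl ` verts G"
  "wt (lift_graph G) (Inl a) (Inl b) = wt G a b"
  "wt (lift_graph G) (Inr c) y = 0"
  "wt (lift_graph G) x (Inr c) = 0"
  "(Inl a, Inl b) \<in> arcs (lift_graph G) \<longleftrightarrow> (a, b) \<in> arcs G"
  "(Inr c, y) \<notin> arcs (lift_graph G)"
  "(x, Inr c) \<notin> arcs (lift_graph G)"
  by (auto simp: lift_graph_def split: sum.splits)

lemma lift_graph_wt_neq_0_imp_arc:
  assumes "wf_graph G"
  shows "\<forall>x y. wt (lift_graph G) x y \<noteq> 0 \<longrightarrow> (x, y) \<in> arcs (lift_graph G)"
proof (intro allI impI)
  fix x y assume "wt (lift_graph G) x y \<noteq> 0"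
  then show "(x, y) \<in> arcs (lift_graph G)"
    using assms by (cases x; cases y) (auto simp: wf_graph_def)
qed

lemma consec_edges_lift_graph: "consec_edges (lift_graph G) (map Inl us) = consec_edges G us"
  by (simp add: consec_edges_def is_edge_def)

lemma is_path_lift_graph: "is_path (lift_graph G) (map Inl us) = is_path G us"
  by (auto simp: is_path_def consec_edges_lift_graph distinct_map)

lemma is_cycle_lift_graph: "is_cycle (lift_graph G) (map Inl us) = is_cycle G us"
  by (cases "us = []")
     (auto simp: is_cycle_def consec_edges_lift_graph distinct_map hd_map last_map map_butlast[symmetric])

lemma interior_map: "interior (map f us) = f ` interior us"
  by (simp add: interior_def map_butlast[symmetric] map_tl[symmetric])

lemma map_projl_Inl: "set us \<subseteq> range Inl \<Longrightarrow> map Inl (map projl us) = us"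
  by (induction us) auto

lemma branches_lift_graph:
  fixes G :: "'v graph"
  shows "branches (lift_graph G) (Inl ` S) (Inl i) (Inl j) = map Inl ` branches G S i j"
proof -
  have mem: "map Inl vs \<in> branches (lift_graph G) (Inl ` S) (Inl i) (Inl j) \<longleftrightarrow> vs \<in> branches G S i j"
    if "vs \<noteq> []" for vs
  proof -
    have "interior (map Inl vs) \<inter> Inl ` S = {} \<longleftrightarrow> interior vs \<inter> S = {}"
      unfolding interior_map by auto
    then show ?thesis
      using that unfolding branches_def mem_Collect_eq is_path_lift_graph is_cycle_lift_graph
      by (auto simp: hd_map last_map)
  qed
  show ?thesis
  proof (intro Set.set_eqI iffI)
    fix us :: "('v + 'v \<times> nat) list"
    assume us: "us \<in> branches (lift_graph G) (Inl ` S) (Inl i) (Inl j)"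
    then have "set us \<subseteq> range Inl" "us \<noteq> []"
      by (auto simp: branches_def is_path_def is_cycle_def)
    then show "us \<in> map Inl ` branches G S i j"
      using us mem[of "map projl us"] map_projl_Inl by (metis Nil_is_map_conv image_eqI)
  next
    fix us :: "('v + 'v \<times> nat) list"
    assume "us \<in> map Inl ` branches G S i j"
    then obtain vs where "vs \<in> branches G S i j" "us = map Inl vs"
      by blast
    moreover from this have "vs \<noteq> []"
      by (auto simp: branches_def is_path_def is_cycle_def)
    ultimately show "us \<in> branches (lift_graph G) (Inl ` S) (Inl i) (Inl j)"
      using mem by blast
  qed
qed

lemma path_weight_lift_graph:
  assumes "2 \<le> length us"
  shows "path_weight (lift_graph G) (map Inl us) = path_weight G us"
proof -
  have "0 < length us" "Suc 0 < length us"
    using assms by auto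
  then show ?thesis
    unfolding path_weight_def by (auto intro!: prod.cong arg_cong2[where f="(*)"])
qed

lemma st_lift_graph:
  assumes "st G S"
  shows "st (lift_graph G) (Inl ` S)"
  unfolding st_def
proof (intro conjI)
  show "Inl ` S \<noteq> {}" "Inl ` S \<subseteq> verts (lift_graph G)"
    using assms by (auto simp: st_def)
  show "\<forall>x \<in> verts (lift_graph G) - Inl ` S. wt (lift_graph G) x x \<noteq> lam"
    using assms by (auto simp: st_def)
  show "\<nexists>us. is_cycle (lift_graph G) us \<and> 3 \<le> length us \<and> set us \<subseteq> verts (lift_graph G) - Inl ` S"
  proof
    assume "\<exists>us. is_cycle (lift_graph G) us \<and> 3 \<le> length us \<and> set us \<subseteq> verts (lift_graph G) - Inl ` S"
    then obtain us where us: "is_cycle (lift_graph G) us" "3 \<le> length us"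
      "set us \<subseteq> verts (lift_graph G) - Inl ` S"
      by blast
    then have "set us \<subseteq> range Inl" by auto
    then have "is_cycle G (map projl us)"
      using us(1) map_projl_Inl is_cycle_lift_graph by metis
    moreover have "set (map projl us) \<subseteq> verts G - S"
      using us(3) by force
    moreover have "3 \<le> length (map projl us)"
      using us(2) by simp
    ultimately show False
      using assms unfolding st_def by blast
  qed
qed

lemma weight_set_lift_graph: "weight_set (lift_graph G) = weight_set G"
proof (intro Set.set_eqI iffI)
  fix c assume "c \<in> weight_set (lift_graph G)"
  then obtain x y where "(x, y) \<in> arcs (lift_graph G)" "c = wt (lift_graph G) x y"
    by (auto simp: weight_set_def)
  then show "c \<in> weight_set G"
    by (cases x; cases y) (auto simp: weight_set_def)
next
  fix c assume "c \<in> weight_set G"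
  then obtain x y where "(x, y) \<in> arcs G" "c = wt G x y"
    by (auto simp: weight_set_def)
  then have "(Inl x, Inl y) \<in> arcs (lift_graph G)" "c = wt (lift_graph G) (Inl x) (Inl y)"
    by simp_all
  then show "c \<in> weight_set (lift_graph G)"
    unfolding weight_set_def by blast
qed

definition L_arcs :: "'v graph \<Rightarrow> 'v set \<Rightarrow> ('v \<Rightarrow> 'v list) \<Rightarrow> (('v + 'v \<times> nat) \<times> ('v + 'v \<times> nat)) set" where
  "L_arcs G S beta = {(x, y). (\<exists>j k. Lpath_arc S beta j k \<and> x = Lnode beta j (Suc k) \<and> y = Lnode beta j k)
     \<or> (\<exists>j \<in> S. \<exists>i \<in> S. \<exists>\<gamma> \<in> branches G S i j - {beta j}. x = Inl i \<and> y = Lnode beta j (length \<gamma> - 2))}"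

definition L_chain_wt :: "'v graph \<Rightarrow> 'v set \<Rightarrow> ('v \<Rightarrow> 'v list) \<Rightarrow> 'v + 'v \<times> nat \<Rightarrow> 'v + 'v \<times> nat \<Rightarrow> rf" where
  "L_chain_wt G S beta x y = (\<Sum>j \<in> S. \<Sum>k \<in> {0..<length (beta j) - 1}.
     if x = Lnode beta j (Suc k) \<and> y = Lnode beta j k
     then (if Suc k = length (beta j) - 1 then lam ^ (length (beta j) - 2) * path_weight G (beta j) else 1)
     else 0)"

definition L_shortcut_wt :: "'v graph \<Rightarrow> 'v set \<Rightarrow> ('v \<Rightarrow> 'v list) \<Rightarrow> 'v + 'v \<times> nat \<Rightarrow> 'v + 'v \<times> nat \<Rightarrow> rf" where
  "L_shortcut_wt G S beta x y = (\<Sum>j \<in> S. \<Sum>i \<in> S. \<Sum>\<gamma> \<in> branches G S i j - {beta j}.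
     if x = Inl i \<and> y = Lnode beta j (length \<gamma> - 2) then lam ^ (length \<gamma> - 2) * path_weight G \<gamma> else 0)"

lemma Lcon_simps:
  "verts (Lcon G S beta) = Inl ` S \<union> {Inr (j, k) | j k. j \<in> S \<and> 1 \<le> k \<and> k < length (beta j) - 1}"
  "arcs (Lcon G S beta) = L_arcs G S beta"
  "wt (Lcon G S beta) x y =
     (if (x, y) \<in> L_arcs G S beta then L_chain_wt G S beta x y + L_shortcut_wt G S beta x y else 0)"
  by (simp_all only: Lcon_def Let_def graph.select_convs L_arcs_def[symmetric] L_chain_wt_def[symmetric]
      L_shortcut_wt_def[symmetric])

lemma Lnode_0 [simp]: "Lnode beta j 0 = Inl j"
  by (simp add: Lnode_def)

lemma Lnode_eq_Inl_iff:
  "Lnode beta j k = Inl x \<longleftrightarrow> (k = 0 \<and> x = j) \<or> (k \<noteq> 0 \<and> k = length (beta j) - 1 \<and> x = hd (beta j))"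
  by (auto simp: Lnode_def)

lemma Lnode_eq_Inr_iff: "Lnode beta j k = Inr p \<longleftrightarrow> k \<noteq> 0 \<and> k \<noteq> length (beta j) - 1 \<and> p = (j, k)"
  by (auto simp: Lnode_def)

lemma Lnode_interior: "1 \<le> k \<Longrightarrow> k < length (beta j) - 1 \<Longrightarrow> Lnode beta j k = Inr (j, k)"
  by (simp add: Lnode_def)

lemma Lnode_inj:
  assumes "k < length (beta j) - 1" "k' < length (beta j') - 1" "Lnode beta j k = Lnode beta j' k'"
  shows "j = j' \<and> k = k'"
  using assms by (auto simp: Lnode_def split: if_splits)

lemma consec_edges_Cons_Cons:
  "consec_edges H (x # y # zs) \<longleftrightarrow> is_edge H x y \<and> consec_edges H (y # zs)"
  unfolding consec_edges_def by (auto simp: less_Suc_eq_0_disj)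

lemma consec_edges_Cons:
  "ys \<noteq> [] \<Longrightarrow> consec_edges H (x # ys) \<longleftrightarrow> is_edge H x (hd ys) \<and> consec_edges H ys"
  by (cases ys) (auto simp: consec_edges_Cons_Cons)

definition L_chain :: "('v \<Rightarrow> 'v list) \<Rightarrow> 'v \<Rightarrow> nat \<Rightarrow> ('v + 'v \<times> nat) list" where
  "L_chain beta j k = map (Lnode beta j) (rev [0..<Suc k])"

lemma L_chain_0 [simp]: "L_chain beta j 0 = [Inl j]"
  by (simp add: L_chain_def)

lemma L_chain_Suc: "L_chain beta j (Suc k) = Lnode beta j (Suc k) # L_chain beta j k"
  by (simp add: L_chain_def)

lemma L_chain_simps [simp]:
  "L_chain beta j k \<noteq> []" "hd (L_chain beta j k) = Lnode beta j k" "last (L_chain beta j k) = Inl j"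
  "length (L_chain beta j k) = Suc k"
  by (auto simp: L_chain_def hd_map last_map hd_rev last_rev)

lemma set_L_chain: "set (L_chain beta j k) = Lnode beta j ` {0..k}"
  unfolding L_chain_def set_map set_rev set_upt by (simp only: atLeastLessThanSuc_atLeastAtMost)

lemma L_chain_eq_append: "L_chain beta j k = map (Lnode beta j) (rev [1..<Suc k]) @ [Inl j]"
  by (induction k) (auto simp: L_chain_Suc)

lemma hd_neq_last_if_decreasing:
  fixes f :: "'a \<Rightarrow> nat"
  assumes "\<And>t. Suc t < length cs \<Longrightarrow> f (cs ! Suc t) < f (cs ! t)" and "2 \<le> length cs"
  shows "hd cs \<noteq> last cs"
proof -
  have descent: "f (cs ! t) + t \<le> f (cs ! 0)" if "t < length cs" for t
    using that
  proof (induction t)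
    case (Suc t)
    then show ?case
      using assms(1)[of t] by simp
  qed simp
  have "cs \<noteq> []"
    using assms(2) by auto
  then have "hd cs = cs ! 0" "last cs = cs ! (length cs - 1)"
    by (simp_all add: hd_conv_nth last_conv_nth)
  moreover have "f (cs ! (length cs - 1)) + (length cs - 1) \<le> f (cs ! 0)"
    using assms(2) by (intro descent) simp
  ultimately show ?thesis
    using assms(2) by auto
qed

locale L_construction =
  fixes G :: "'v graph" and S :: "'v set" and beta :: "'v \<Rightarrow> 'v list"
  assumes wf: "wf_graph G" and st0: "st0 G S" and mbc: "max_branch_choice G S beta"
begin

lemma S_subset: "S \<subseteq> verts G"
  using st0 by (simp add: st0_def st_def)

lemma finite_S: "finite S"
  using S_subset wf finite_subset by (auto simp: wf_graph_def)

lemma branch_length: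
  assumes "\<gamma> \<in> branches G S i j"
  shows "2 \<le> length \<gamma>" "length \<gamma> \<le> length (beta j)"
  using assms mbc by (auto simp: branches_def is_path_def is_cycle_def max_branch_choice_def)

lemma beta_branch: "j \<in> S \<Longrightarrow> beta j \<in> branches G S (hd (beta j)) j \<and> hd (beta j) \<in> S"
  using mbc by (auto simp: max_branch_choice_def branches_def)

lemma beta_length: "j \<in> S \<Longrightarrow> 2 \<le> length (beta j)"
  using beta_branch branch_length(1) by blast

lemma finite_branches: "i \<in> S \<Longrightarrow> j \<in> S \<Longrightarrow> finite (branches G S i j)"
  using branches_eq_image[OF S_subset] finite_distinct_lists[of "verts G - S"] wf
  by (simp add: wf_graph_def)

lemma L_arc_from_Inr:
  assumes "(Inr (j, k), y) \<in> L_arcs G S beta"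
  shows "j \<in> S \<and> 1 \<le> k \<and> k < length (beta j) - 1 \<and> y = Lnode beta j (k - 1)"
  using assms
  by (auto simp: L_arcs_def Lpath_arc_def Lnode_eq_Inr_iff sym[OF Lnode_eq_Inr_iff[of beta]] Lnode_def
      split: if_splits)

lemma L_arc_from_Inl:
  assumes "(Inl i, y) \<in> L_arcs G S beta"
  obtains j k \<gamma> where "j \<in> S" "k < length (beta j) - 1" "y = Lnode beta j k"
    "\<gamma> \<in> branches G S i j" "length \<gamma> - 2 = k"
  using assms unfolding L_arcs_def
proof (elim CollectE case_prodE disjE exE conjE bexE, goal_cases path shortcut)
  case (path x y' j k)
  then have j: "j \<in> S" "Suc k = length (beta j) - 1" "i = hd (beta j)"
    by (auto simp: Lpath_arc_def Lnode_def split: if_splits)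
  then show thesis
    using path beta_branch[OF j(1)] beta_length[OF j(1)] by (intro path(1)[of j k "beta j"]) auto
next
  case (shortcut x y' j i' \<gamma>)
  then show thesis
    using branch_length[of \<gamma> i j] by (intro shortcut(1)[of j "length \<gamma> - 2" \<gamma>]) auto
qed

lemma L_arc_Inl_iff:
  assumes i: "i \<in> S" and j: "j \<in> S" and k: "k < length (beta j) - 1"
  shows "(Inl i, Lnode beta j k) \<in> L_arcs G S beta \<longleftrightarrow> (\<exists>\<gamma> \<in> branches G S i j. length \<gamma> - 2 = k)"
proof
  assume "(Inl i, Lnode beta j k) \<in> L_arcs G S beta"
  then show "\<exists>\<gamma> \<in> branches G S i j. length \<gamma> - 2 = k"
    by (rule L_arc_from_Inl) (use Lnode_inj[of k beta j] k in blast)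
next
  assume "\<exists>\<gamma> \<in> branches G S i j. length \<gamma> - 2 = k"
  then obtain \<gamma> where \<gamma>: "\<gamma> \<in> branches G S i j" "length \<gamma> - 2 = k" by blast
  show "(Inl i, Lnode beta j k) \<in> L_arcs G S beta"
  proof (cases "\<gamma> = beta j")
    case True
    then have "Lnode beta j (Suc k) = Inl i"
      using \<gamma> beta_length[OF j] by (auto simp: Lnode_def branches_def)
    then show ?thesis
      unfolding L_arcs_def mem_Collect_eq case_prod_conv
      by (intro disjI1 exI[of _ j] exI[of _ k]) (use j k in \<open>auto simp: Lpath_arc_def\<close>)
  next
    case False
    then show ?thesis
      unfolding L_arcs_def using \<gamma> i j by blast
  qed
qed

lemma L_arc_chain:
  "j \<in> S \<Longrightarrow> Suc t < length (beta j) - 1 \<Longrightarrow> (Lnode beta j (Suc t), Lnode beta j t) \<in> L_arcs G S beta"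
  unfolding L_arcs_def Lpath_arc_def by (intro CollectI case_prodI disjI1 exI[of _ j] exI[of _ t]) auto

lemma walk_from_interior_is_L_chain:
  assumes "j \<in> S" "1 \<le> k" "k < length (beta j) - 1"
    and "consec_edges (Lcon G S beta) (Lnode beta j k # us)" "us \<noteq> []" "last us \<in> Inl ` S"
    and "\<forall>x \<in> set (butlast us). x \<notin> Inl ` S"
  shows "Lnode beta j k # us = L_chain beta j k"
  using assms
proof (induction k arbitrary: us)
  case (Suc k)
  obtain y us' where us: "us = y # us'"
    using Suc.prems(5) by (cases us) auto
  have "Lnode beta j (Suc k) = Inr (j, Suc k)"
    using Suc.prems(3) by (simp add: Lnode_interior)
  then have "(Inr (j, Suc k), y) \<in> L_arcs G S beta"
    using Suc.prems(4) us by (simp add: consec_edges_Cons_Cons is_edge_def Lcon_simps)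
  then have y: "y = Lnode beta j k"
    using L_arc_from_Inr by fastforce
  show ?case
  proof (cases "k = 0")
    case True
    then have "y = Inl j" using y by simp
    then have "us' = []"
      using Suc.prems(1,7) us by (cases us') auto
    then show ?thesis
      using us y True by (simp add: L_chain_Suc)
  next
    case False
    then have "y = Inr (j, k)"
      using y Suc.prems(3) by (simp add: Lnode_interior)
    then have "us' \<noteq> []"
      using Suc.prems(6) us by auto
    then have "Lnode beta j k # us' = L_chain beta j k"
      using Suc.IH[of us'] Suc.prems False us y by (auto simp: consec_edges_Cons_Cons)
    then show ?thesis
      using us y by (simp add: L_chain_Suc)
  qed
qed simp

lemma L_chain_in_verts:
  "j \<in> S \<Longrightarrow> k < length (beta j) - 1 \<Longrightarrow> set (L_chain beta j k) \<subseteq> verts (Lcon G S beta)"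
  by (auto simp: set_L_chain Lcon_simps Lnode_def)

lemma consec_edges_L_chain:
  assumes "j \<in> S" "k < length (beta j) - 1"
  shows "consec_edges (Lcon G S beta) (L_chain beta j k)"
  using assms(2)
proof (induction k)
  case (Suc k)
  then show ?case
    using L_arc_chain[OF assms(1) Suc.prems]
    by (simp add: L_chain_Suc consec_edges_Cons is_edge_def Lcon_simps)
qed (simp add: consec_edges_def)

lemma distinct_L_chain:
  assumes "k < length (beta j) - 1"
  shows "distinct (L_chain beta j k)"
  unfolding L_chain_def distinct_map
proof
  show "inj_on (Lnode beta j) (set (rev [0..<Suc k]))"
  proof (rule inj_onI)
    fix x y assume "x \<in> set (rev [0..<Suc k])" "y \<in> set (rev [0..<Suc k])" "Lnode beta j x = Lnode beta j y"
    then show "x = y"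
      using assms Lnode_inj[of x beta j y j] by auto
  qed
qed simp

lemma branch_Lcon_imp_L_chain:
  assumes i: "i \<in> S" and j: "j \<in> S" and us: "us \<in> branches (Lcon G S beta) (Inl ` S) (Inl i) (Inl j)"
  obtains k where "k < length (beta j) - 1" "(Inl i, Lnode beta j k) \<in> L_arcs G S beta"
    "us = Inl i # L_chain beta j k"
proof -
  from us have len: "2 \<le> length us" and hd: "hd us = Inl i" and last: "last us = Inl j"
    and int: "interior us \<inter> Inl ` S = {}" and ce: "consec_edges (Lcon G S beta) us"
    by (auto simp: branches_def is_path_def is_cycle_def)
  obtain y rest where us_eq: "us = Inl i # y # rest"
    using len hd by (cases us; cases "tl us") auto
  have arc: "(Inl i, y) \<in> L_arcs G S beta"
    using ce us_eq by (simp add: consec_edges_Cons_Cons is_edge_def Lcon_simps)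
  then obtain j' k where jk: "j' \<in> S" "k < length (beta j') - 1" "y = Lnode beta j' k"
    by (rule L_arc_from_Inl)
  have int_eq: "interior us = set (butlast (y # rest))"
    by (simp add: interior_def us_eq)
  have "y # rest = L_chain beta j' k"
  proof (cases "k = 0")
    case True
    then have "rest = []"
      using int int_eq jk by (cases rest) auto
    then show ?thesis
      using True jk by simp
  next
    case False
    have "rest \<noteq> []"
      using last us_eq jk False by (auto simp: Lnode_interior)
    then show ?thesis
      using walk_from_interior_is_L_chain[OF jk(1) _ jk(2), of rest] False j jk ce us_eq last int int_eq
      by (auto simp: consec_edges_Cons_Cons butlast.simps(2))
  qed
  moreover from this have "j' = j"
    using last us_eq by (metis L_chain_simps(3) last_ConsR list.distinct(1) sum.inject(1))
  ultimately show thesis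
    using that jk arc us_eq by blast
qed

lemma L_chain_imp_branch_Lcon:
  assumes i: "i \<in> S" and j: "j \<in> S" and k: "k < length (beta j) - 1"
    and arc: "(Inl i, Lnode beta j k) \<in> L_arcs G S beta"
  shows "Inl i # L_chain beta j k \<in> branches (Lcon G S beta) (Inl ` S) (Inl i) (Inl j)"
proof -
  have inner: "x \<notin> range Inl" if "x \<in> set (butlast (L_chain beta j k))" for x
    using that k by (auto simp: L_chain_eq_append butlast_append Lnode_interior)
  have set: "set (Inl i # L_chain beta j k) \<subseteq> verts (Lcon G S beta)"
    using L_chain_in_verts[OF j k] i by (auto simp: Lcon_simps)
  have ce: "consec_edges (Lcon G S beta) (Inl i # L_chain beta j k)"
    using consec_edges_L_chain[OF j k] arc by (simp add: consec_edges_Cons is_edge_def Lcon_simps)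
  have "is_path (Lcon G S beta) (Inl i # L_chain beta j k) \<or> is_cycle (Lcon G S beta) (Inl i # L_chain beta j k)"
  proof (cases "i = j")
    case False
    have "Inl i \<notin> set (L_chain beta j k)"
    proof
      assume "Inl i \<in> set (L_chain beta j k)"
      then obtain t where "t \<le> k" "Lnode beta j t = Inl i"
        by (auto simp: set_L_chain)
      then show False
        using False k by (auto simp: Lnode_eq_Inl_iff)
    qed
    then show ?thesis
      using distinct_L_chain[OF k] set ce by (auto simp: is_path_def)
  next
    case True
    have "distinct (butlast (L_chain beta j k))"
      using distinct_L_chain[OF k] by (simp add: distinct_butlast)
    then show ?thesis
      using True inner set ce by (auto simp: is_cycle_def)
  qed
  then show ?thesis
    using inner i j by (auto simp: branches_def interior_def)
qed

lemma branches_Lcon: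
  assumes "i \<in> S" "j \<in> S"
  shows "branches (Lcon G S beta) (Inl ` S) (Inl i) (Inl j) =
    (\<lambda>k. Inl i # L_chain beta j k) ` {k. k < length (beta j) - 1 \<and> (Inl i, Lnode beta j k) \<in> L_arcs G S beta}"
  using branch_Lcon_imp_L_chain[OF assms] L_chain_imp_branch_Lcon[OF assms] by blast

lemma sum_Lnode_delta:
  assumes j: "j \<in> S" and k: "k < length (beta j) - 1"
  shows "(\<Sum>j' \<in> S. \<Sum>k' \<in> {0..<length (beta j') - 1}.
      if Lnode beta j k = Lnode beta j' k' then f j' k' else 0) = f j k"
proof -
  have "(\<Sum>j' \<in> S. \<Sum>k' \<in> {0..<length (beta j') - 1}.
      if Lnode beta j k = Lnode beta j' k' then f j' k' else 0) =
      (\<Sum>j' \<in> S. if j' = j then f j k else 0)"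
  proof (intro sum.cong refl)
    fix j' assume "j' \<in> S"
    have "(\<Sum>k' \<in> {0..<length (beta j') - 1}. if Lnode beta j k = Lnode beta j' k' then f j' k' else 0)
        = (\<Sum>k' \<in> {0..<length (beta j') - 1}. if j' = j \<and> k' = k then f j' k' else 0)"
      using k Lnode_inj[of k beta j _ j'] by (intro sum.cong refl) auto
    also have "\<dots> = (if j' = j then f j k else 0)"
      using k by (auto simp: sum.delta)
    finally show "(\<Sum>k' \<in> {0..<length (beta j') - 1}. if Lnode beta j k = Lnode beta j' k' then f j' k' else 0)
        = (if j' = j then f j k else 0)" .
  qed
  also have "\<dots> = f j k"
    using j finite_S by (simp add: sum.delta')
  finally show ?thesis .
qed

lemma L_chain_wt_at_Lnode:
  assumes "j \<in> S" "k < length (beta j) - 1"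
  shows "L_chain_wt G S beta x (Lnode beta j k) = (if x = Lnode beta j (Suc k) then
    (if Suc k = length (beta j) - 1 then lam ^ (length (beta j) - 2) * path_weight G (beta j) else 1)
    else 0)"
proof -
  define F where "F = (\<lambda>j' k'. if x = Lnode beta j' (Suc k') then
    (if Suc k' = length (beta j') - 1 then lam ^ (length (beta j') - 2) * path_weight G (beta j') else 1)
    else 0)"
  have "L_chain_wt G S beta x (Lnode beta j k) = (\<Sum>j' \<in> S. \<Sum>k' \<in> {0..<length (beta j') - 1}.
      if Lnode beta j k = Lnode beta j' k' then F j' k' else 0)"
    unfolding L_chain_wt_def F_def by (intro sum.cong refl) auto
  then show ?thesis
    unfolding sum_Lnode_delta[OF assms] F_def .
qed

lemma L_shortcut_wt_at_Lnode:
  assumes j: "j \<in> S" and k: "k < length (beta j) - 1"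
  shows "L_shortcut_wt G S beta x (Lnode beta j k) = (\<Sum>i \<in> S. \<Sum>\<gamma> \<in> branches G S i j - {beta j}.
    if x = Inl i \<and> length \<gamma> - 2 = k then lam ^ k * path_weight G \<gamma> else 0)"
    (is "_ = ?rhs")
proof -
  have target: "Lnode beta j k = Lnode beta j' (length \<gamma> - 2) \<longleftrightarrow> j' = j \<and> length \<gamma> - 2 = k"
    if "\<gamma> \<in> branches G S i j'" for i j' \<gamma>
    using k branch_length[OF that] Lnode_inj[of k beta j "length \<gamma> - 2" j'] by auto
  have "(\<Sum>i \<in> S. \<Sum>\<gamma> \<in> branches G S i j' - {beta j'}. if x = Inl i \<and> Lnode beta j k = Lnode beta j' (length \<gamma> - 2)
      then lam ^ (length \<gamma> - 2) * path_weight G \<gamma> else 0) = (if j' = j then ?rhs else 0)" for j'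
  proof (cases "j' = j")
    case True
    then show ?thesis
      using target by (auto intro!: sum.cong split: if_splits)
  next
    case False
    then show ?thesis
      using target by (auto intro!: sum.neutral)
  qed
  then have "L_shortcut_wt G S beta x (Lnode beta j k) = (\<Sum>j' \<in> S. if j' = j then ?rhs else 0)"
    unfolding L_shortcut_wt_def by presburger
  then show ?thesis
    using j finite_S by (simp add: sum.delta')
qed

lemma wt_Lcon_L_chain:
  assumes j: "j \<in> S" and t: "Suc t < length (beta j) - 1"
  shows "wt (Lcon G S beta) (Lnode beta j (Suc t)) (Lnode beta j t) = 1"
proof -
  have "Lnode beta j (Suc t) = Inr (j, Suc t)"
    using t by (simp add: Lnode_interior)
  then have "L_shortcut_wt G S beta (Lnode beta j (Suc t)) (Lnode beta j t) = 0"
    using j t by (simp add: L_shortcut_wt_at_Lnode)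
  then show ?thesis
    using L_arc_chain[OF j t] j t by (simp add: Lcon_simps L_chain_wt_at_Lnode)
qed

lemma L_chain_wt_Inl:
  assumes j: "j \<in> S" and k: "k < length (beta j) - 1"
  shows "L_chain_wt G S beta (Inl i) (Lnode beta j k) =
    (if beta j \<in> {\<gamma> \<in> branches G S i j. length \<gamma> - 2 = k} then lam ^ k * path_weight G (beta j) else 0)"
proof -
  have beta_iff: "beta j \<in> {\<gamma> \<in> branches G S i j. length \<gamma> - 2 = k} \<longleftrightarrow> Inl i = Lnode beta j (Suc k)"
    using beta_branch[OF j] beta_length[OF j] k by (auto simp: Lnode_def branches_def)
  show ?thesis
  proof (cases "Inl i = Lnode beta j (Suc k)")
    case True
    then have "Suc k = length (beta j) - 1"
      by (auto simp: Lnode_def split: if_splits)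
    moreover from this have "length (beta j) - 2 = k"
      by linarith
    ultimately show ?thesis
      using True beta_iff j k by (simp add: L_chain_wt_at_Lnode)
  next
    case False
    then have "beta j \<notin> {\<gamma> \<in> branches G S i j. length \<gamma> - 2 = k}"
      using beta_iff by blast
    then show ?thesis
      using False j k by (auto simp: L_chain_wt_at_Lnode)
  qed
qed

lemma L_shortcut_wt_Inl:
  assumes i: "i \<in> S" and j: "j \<in> S" and k: "k < length (beta j) - 1"
  shows "L_shortcut_wt G S beta (Inl i) (Lnode beta j k) =
    (\<Sum>\<gamma> \<in> {\<gamma> \<in> branches G S i j. length \<gamma> - 2 = k} - {beta j}. lam ^ k * path_weight G \<gamma>)"
proof -
  have "L_shortcut_wt G S beta (Inl i) (Lnode beta j k) = (\<Sum>i' \<in> S. if i' = i then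
      (\<Sum>\<gamma> \<in> branches G S i j - {beta j}. if length \<gamma> - 2 = k then lam ^ k * path_weight G \<gamma> else 0)
      else 0)"
    unfolding L_shortcut_wt_at_Lnode[OF j k] by (intro sum.cong refl) auto
  also have "\<dots> = (\<Sum>\<gamma> \<in> branches G S i j - {beta j}. if length \<gamma> - 2 = k then lam ^ k * path_weight G \<gamma> else 0)"
    using i finite_S by (simp add: sum.delta')
  also have "\<dots> = (\<Sum>\<gamma> \<in> {\<gamma> \<in> branches G S i j. length \<gamma> - 2 = k} - {beta j}. lam ^ k * path_weight G \<gamma>)"
    using finite_branches[OF i j] by (subst sum.inter_filter[symmetric]) (auto intro!: sum.cong)
  finally show ?thesis .
qed

lemma wt_Lcon_Inl:
  assumes i: "i \<in> S" and j: "j \<in> S" and k: "k < length (beta j) - 1"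
  shows "wt (Lcon G S beta) (Inl i) (Lnode beta j k) =
    (\<Sum>\<gamma> \<in> {\<gamma> \<in> branches G S i j. length \<gamma> - 2 = k}. lam ^ k * path_weight G \<gamma>)"
proof -
  define B where "B = {\<gamma> \<in> branches G S i j. length \<gamma> - 2 = k}"
  have "finite B"
    using finite_branches[OF i j] by (simp add: B_def)
  then have "L_chain_wt G S beta (Inl i) (Lnode beta j k) + L_shortcut_wt G S beta (Inl i) (Lnode beta j k) =
      (\<Sum>\<gamma> \<in> B. lam ^ k * path_weight G \<gamma>)"
    unfolding L_chain_wt_Inl[OF j k] L_shortcut_wt_Inl[OF i j k] B_def[symmetric]
    by (simp add: sum.remove)
  moreover have "B = {}" if "(Inl i, Lnode beta j k) \<notin> L_arcs G S beta"
    using L_arc_Inl_iff[OF i j k] that by (auto simp: B_def)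
  ultimately show ?thesis
    unfolding B_def[symmetric] by (auto simp: Lcon_simps)
qed

lemma Inr_loop_not_L_arc: "(Inr p, Inr p) \<notin> L_arcs G S beta"
proof
  assume arc: "(Inr p, Inr p) \<in> L_arcs G S beta"
  obtain j k where p: "p = (j, k)" by (cases p)
  from L_arc_from_Inr[OF arc[unfolded p]] have "1 \<le> k" "Lnode beta j (k - 1) = Inr (j, k)"
    by auto
  then show False
    by (auto simp: Lnode_eq_Inr_iff)
qed

lemma Lcon_loop_outside: "x \<in> verts (Lcon G S beta) - Inl ` S \<Longrightarrow> wt (Lcon G S beta) x x = 0"
  using Inr_loop_not_L_arc by (auto simp: Lcon_simps)

lemma Lcon_wt_neq_0_imp_arc: "\<forall>x y. wt (Lcon G S beta) x y \<noteq> 0 \<longrightarrow> (x, y) \<in> arcs (Lcon G S beta)"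
  by (simp add: Lcon_simps)

lemma card_verts_Lcon: "card (verts (Lcon G S beta)) = card S + (\<Sum>j \<in> S. length (beta j) - 2)"
proof -
  define R :: "('v + 'v \<times> nat) set" where "R = (\<lambda>(j, k). Inr (j, k)) ` (SIGMA j:S. {1..<length (beta j) - 1})"
  have "verts (Lcon G S beta) = Inl ` S \<union> R"
    by (auto simp: Lcon_simps R_def)
  moreover have "card R = (\<Sum>j \<in> S. length (beta j) - 2)"
    unfolding R_def using finite_S by (subst card_image) (auto simp: inj_on_def card_SigmaI numeral_2_eq_2)
  moreover have "finite R" "Inl ` S \<inter> R = {}"
    using finite_S by (auto simp: R_def)
  ultimately show ?thesis
    using finite_S by (simp add: card_Un_disjoint card_image)
qed

lemma finite_verts_Lcon: "finite (verts (Lcon G S beta))"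
  using card_verts_Lcon card.infinite finite_S st0 by (fastforce simp: st0_def st_def)

lemma L_arc_between_Inr_decreases:
  assumes "(Inr (j, k), Inr (j', k')) \<in> L_arcs G S beta"
  shows "k' < k"
proof -
  from L_arc_from_Inr[OF assms] have "1 \<le> k" "Lnode beta j (k - 1) = Inr (j', k')"
    by auto
  then show ?thesis
    by (auto simp: Lnode_eq_Inr_iff)
qed

lemma st_Lcon: "st (Lcon G S beta) (Inl ` S)"
  unfolding st_def
proof (intro conjI)
  show "Inl ` S \<noteq> {}" "Inl ` S \<subseteq> verts (Lcon G S beta)"
    using st0 by (auto simp: st0_def st_def Lcon_simps)
  show "\<forall>x \<in> verts (Lcon G S beta) - Inl ` S. wt (Lcon G S beta) x x \<noteq> lam"
    using Lcon_loop_outside lam_neq_0 by auto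
  show "\<nexists>cs. is_cycle (Lcon G S beta) cs \<and> 3 \<le> length cs \<and> set cs \<subseteq> verts (Lcon G S beta) - Inl ` S"
  proof
    assume "\<exists>cs. is_cycle (Lcon G S beta) cs \<and> 3 \<le> length cs \<and> set cs \<subseteq> verts (Lcon G S beta) - Inl ` S"
    then obtain cs where cyc: "is_cycle (Lcon G S beta) cs" and len: "3 \<le> length cs"
      and sub: "set cs \<subseteq> verts (Lcon G S beta) - Inl ` S" by blast
    have "snd (projr (cs ! Suc t)) < snd (projr (cs ! t))" if t: "Suc t < length cs" for t
    proof -
      obtain j k where a: "cs ! t = Inr (j, k)"
        using sub t nth_mem[of t cs] by (fastforce simp: Lcon_simps)
      obtain j' k' where b: "cs ! Suc t = Inr (j', k')"
        using sub t nth_mem[of "Suc t" cs] by (fastforce simp: Lcon_simps)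
      have "(cs ! t, cs ! Suc t) \<in> L_arcs G S beta"
        using cyc t by (auto simp: is_cycle_def consec_edges_def is_edge_def Lcon_simps)
      then have "k' < k"
        unfolding a b by (rule L_arc_between_Inr_decreases)
      then show ?thesis
        by (simp add: a b)
    qed
    then have "hd cs \<noteq> last cs"
      using len by (intro hd_neq_last_if_decreasing) auto
    then show False
      using cyc by (simp add: is_cycle_def)
  qed
qed

lemma walk_weight_L_chain:
  "j \<in> S \<Longrightarrow> k < length (beta j) - 1 \<Longrightarrow> walk_weight (wt (Lcon G S beta)) (L_chain beta j k) = 1"
  by (induction k) (auto simp: L_chain_Suc walk_weight_Cons wt_Lcon_L_chain)

lemma path_weight_Lcon_branch:
  assumes j: "j \<in> S" and k: "k < length (beta j) - 1"
  shows "path_weight (Lcon G S beta) (Inl i # L_chain beta j k) = wt (Lcon G S beta) (Inl i) (Lnode beta j k) / lam ^ k"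
proof -
  define xs where "xs = map (Lnode beta j) (rev [1..<Suc k])"
  have "\<forall>x \<in> set xs. wt (Lcon G S beta) x x = 0"
    using k Inr_loop_not_L_arc by (auto simp: xs_def Lnode_interior Lcon_simps)
  moreover have "length xs = k"
    by (simp add: xs_def)
  ultimately have "path_weight (Lcon G S beta) (Inl i # xs @ [Inl j]) =
      walk_weight (wt (Lcon G S beta)) (Inl i # xs @ [Inl j]) / lam ^ k"
    by (simp add: path_weight_eq_walk_weight)
  moreover have "xs @ [Inl j] = L_chain beta j k"
    by (simp add: xs_def L_chain_eq_append)
  ultimately show ?thesis
    using walk_weight_L_chain[OF j k] by (simp add: walk_weight_Cons)
qed

lemma sum_path_weight_branches_Lcon:
  assumes i: "i \<in> S" and j: "j \<in> S"
  shows "(\<Sum>us \<in> branches (Lcon G S beta) (Inl ` S) (Inl i) (Inl j). path_weight (Lcon G S beta) us)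
       = (\<Sum>\<gamma> \<in> branches G S i j. path_weight G \<gamma>)"
proof -
  define K where "K = {k. k < length (beta j) - 1 \<and> (Inl i, Lnode beta j k) \<in> L_arcs G S beta}"
  define B where "B = branches G S i j"
  have "(\<Sum>us \<in> branches (Lcon G S beta) (Inl ` S) (Inl i) (Inl j). path_weight (Lcon G S beta) us)
      = (\<Sum>k \<in> K. path_weight (Lcon G S beta) (Inl i # L_chain beta j k))"
    unfolding branches_Lcon[OF i j] K_def[symmetric]
    by (rule sum.reindex[unfolded comp_def]) (auto simp: inj_on_def dest: arg_cong[of _ _ length])
  also have "\<dots> = (\<Sum>k \<in> K. \<Sum>\<gamma> \<in> {\<gamma> \<in> B. length \<gamma> - 2 = k}. path_weight G \<gamma>)"
    using j lam_neq_0
    by (intro sum.cong refl) (simp add: K_def B_def path_weight_Lcon_branch wt_Lcon_Inl[OF i j]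
        flip: sum_distrib_left)
  also have "\<dots> = (\<Sum>k \<in> {0..<length (beta j) - 1}. \<Sum>\<gamma> \<in> {\<gamma> \<in> B. length \<gamma> - 2 = k}. path_weight G \<gamma>)"
    using L_arc_Inl_iff[OF i j] by (intro sum.mono_neutral_left) (auto simp: K_def B_def intro!: sum.neutral)
  also have "\<dots> = (\<Sum>\<gamma> \<in> B. path_weight G \<gamma>)"
  proof (rule sum.group)
    show "(\<lambda>\<gamma>. length \<gamma> - 2) ` B \<subseteq> {0..<length (beta j) - 1}"
      using branch_length[of _ i j] by (force simp: B_def)
  qed (use finite_branches[OF i j] in \<open>auto simp: B_def\<close>)
  finally show ?thesis
    unfolding B_def .
qed

lemma branches_Lcon_nonempty_iff:
  assumes i: "i \<in> S" and j: "j \<in> S"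
  shows "branches (Lcon G S beta) (Inl ` S) (Inl i) (Inl j) \<noteq> {} \<longleftrightarrow> branches G S i j \<noteq> {}"
proof -
  have "branches G S i j \<noteq> {} \<longleftrightarrow> (\<exists>k < length (beta j) - 1. \<exists>\<gamma> \<in> branches G S i j. length \<gamma> - 2 = k)"
  proof
    assume "branches G S i j \<noteq> {}"
    then obtain \<gamma> where "\<gamma> \<in> branches G S i j"
      by blast
    then show "\<exists>k < length (beta j) - 1. \<exists>\<gamma> \<in> branches G S i j. length \<gamma> - 2 = k"
      using branch_length[of \<gamma> i j] by (intro exI[of _ "length \<gamma> - 2"]) auto
  qed blast
  also have "\<dots> \<longleftrightarrow> (\<exists>k < length (beta j) - 1. (Inl i, Lnode beta j k) \<in> L_arcs G S beta)"
    using L_arc_Inl_iff[OF i j] by blast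
  finally show ?thesis
    unfolding branches_Lcon[OF i j] by blast
qed

lemma isored_eqI:
  assumes "\<And>x y. x \<in> T \<Longrightarrow> y \<in> T \<Longrightarrow> branches H1 T x y \<noteq> {} \<longleftrightarrow> branches H2 T x y \<noteq> {}"
    and "\<And>x y. x \<in> T \<Longrightarrow> y \<in> T \<Longrightarrow>
      (\<Sum>\<beta> \<in> branches H1 T x y. path_weight H1 \<beta>) = (\<Sum>\<beta> \<in> branches H2 T x y. path_weight H2 \<beta>)"
  shows "isored H1 T = isored H2 T"
  unfolding isored_def using assms by (auto intro!: ext)

lemma isored_Lcon_eq_isored_lift_graph: "isored (Lcon G S beta) (Inl ` S) = isored (lift_graph G) (Inl ` S)"
proof (rule isored_eqI)
  fix x y :: "'v + 'v \<times> nat" assume "x \<in> Inl ` S" "y \<in> Inl ` S"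
  then obtain i j where ij: "i \<in> S" "j \<in> S" "x = Inl i" "y = Inl j" by auto
  show "branches (Lcon G S beta) (Inl ` S) x y \<noteq> {} \<longleftrightarrow> branches (lift_graph G) (Inl ` S) x y \<noteq> {}"
    using branches_Lcon_nonempty_iff[OF ij(1,2)] by (simp add: ij branches_lift_graph)
  have "(\<Sum>\<beta> \<in> branches (lift_graph G) (Inl ` S) x y. path_weight (lift_graph G) \<beta>)
      = (\<Sum>\<gamma> \<in> branches G S i j. path_weight (lift_graph G) (map Inl \<gamma>))"
    unfolding ij branches_lift_graph by (rule sum.reindex[unfolded comp_def]) (auto simp: inj_on_def)
  also have "\<dots> = (\<Sum>\<gamma> \<in> branches G S i j. path_weight G \<gamma>)"
    using branch_length(1) by (intro sum.cong refl path_weight_lift_graph) auto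
  finally show "(\<Sum>\<beta> \<in> branches (Lcon G S beta) (Inl ` S) x y. path_weight (Lcon G S beta) \<beta>) =
      (\<Sum>\<beta> \<in> branches (lift_graph G) (Inl ` S) x y. path_weight (lift_graph G) \<beta>)"
    using sum_path_weight_branches_Lcon[OF ij(1,2)] by (simp add: ij)
qed

lemma lam_power_mul_path_weight_branch:
  assumes "\<gamma> \<in> branches G S i j"
  shows "lam ^ (length \<gamma> - 2) * path_weight G \<gamma> = walk_weight (wt G) \<gamma>"
proof -
  have ij: "i \<in> S" "j \<in> S"
    using assms by (auto simp: branches_def)
  then obtain xs where xs: "xs \<in> distinct_lists (verts G - S)" and \<gamma>: "\<gamma> = i # xs @ [j]"
    using assms unfolding branches_eq_image[OF S_subset ij] by auto
  have "\<forall>x \<in> set xs. wt G x x = 0"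
    using xs st0 by (auto simp: distinct_lists_def st0_def)
  then show ?thesis
    unfolding \<gamma> using path_weight_eq_walk_weight[of xs G i j] lam_neq_0 by simp
qed

lemma weight_set_Lcon_subset:
  assumes U: "unital_subring U" "weight_set G \<subseteq> U"
  shows "weight_set (Lcon G S beta) \<subseteq> U"
proof -
  have closed: "0 \<in> U" "1 \<in> U" "a \<in> U \<Longrightarrow> b \<in> U \<Longrightarrow> a + b \<in> U" "a \<in> U \<Longrightarrow> b \<in> U \<Longrightarrow> a * b \<in> U"
    for a b using U(1) unfolding unital_subring_def by (metis add.right_inverse)+
  have sum: "sum f A \<in> U" if "\<And>x. x \<in> A \<Longrightarrow> f x \<in> U" for f and A :: "'a set"
    using that by (induction A rule: infinite_finite_induct) (auto intro: closed)
  have walk: "walk_weight (wt G) us \<in> U" if "consec_edges G us" for us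
    using that
  proof (induction "wt G" us rule: walk_weight.induct)
    case (1 x y zs)
    then have "wt G x y \<in> U" "walk_weight (wt G) (y # zs) \<in> U"
      using U(2) by (auto simp: consec_edges_Cons_Cons is_edge_def weight_set_def)
    then show ?case by (simp add: closed)
  qed (simp_all add: closed)
  have branch: "lam ^ (length \<gamma> - 2) * path_weight G \<gamma> \<in> U" if "\<gamma> \<in> branches G S i j" for \<gamma> i j
    using that walk by (auto simp: lam_power_mul_path_weight_branch branches_def is_path_def is_cycle_def)
  show ?thesis
  proof
    fix c assume "c \<in> weight_set (Lcon G S beta)"
    then obtain x y where "c = L_chain_wt G S beta x y + L_shortcut_wt G S beta x y"
      by (auto simp: weight_set_def Lcon_simps)
    moreover have "L_chain_wt G S beta x y \<in> U"
      unfolding L_chain_wt_def using beta_branch by (intro sum) (auto intro: closed branch)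
    moreover have "L_shortcut_wt G S beta x y \<in> U"
      unfolding L_shortcut_wt_def by (intro sum) (auto intro: closed branch)
    ultimately show "c \<in> U"
      by (simp add: closed)
  qed
qed

end

theorem theorem6:
  fixes G :: "'v graph" and U :: "rf set" and S :: "'v set" and beta :: "'v \<Rightarrow> 'v list"
  assumes "wf_graph G"
    and "unital_subring U"
    and "weight_set G \<subseteq> U"
    and "st0 G S"
    and "\<forall>v \<in> verts G. \<exists>\<beta> \<in> all_branches G S. v \<in> set \<beta>"
    and "max_branch_choice G S beta"
  shows "spec_equiv (lift_graph G) (Lcon G S beta)
       \<and> nonzero_spectrum (lift_graph G) = nonzero_spectrum (Lcon G S beta)
       \<and> (card (verts G) > card S + (\<Sum>j \<in> S. length (beta j) - 2)
            \<longrightarrow> is_reduction U (lift_graph G) (Lcon G S beta))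
       \<and> (\<not> card (verts G) > card S + (\<Sum>j \<in> S. length (beta j) - 2)
            \<longrightarrow> is_expansion U (lift_graph G) (Lcon G S beta))"
proof -
  interpret L_construction G S beta
    using assms(1,4,6) by unfold_locales
  have st: "st (lift_graph G) (Inl ` S)" "st (Lcon G S beta) (Inl ` S)"
    using st0 st_lift_graph st_Lcon by (auto simp: st0_def)
  have loops: "\<forall>x \<in> verts (lift_graph G) - Inl ` S. wt (lift_graph G) x x = 0"
    using st0 by (auto simp: st0_def)
  have "spec_equiv (lift_graph G) (Lcon G S beta)"
    unfolding spec_equiv_def using st isored_Lcon_eq_isored_lift_graph by metis
  moreover have "nonzero_spectrum (lift_graph G) = nonzero_spectrum (Lcon G S beta)"
    using wf st loops Lcon_loop_outside Lcon_wt_neq_0_imp_arc isored_Lcon_eq_isored_lift_graph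
    by (intro nonzero_spectrum_eq_if_isored_eq)
       (auto simp: finite_verts_Lcon lift_graph_wt_neq_0_imp_arc wf_graph_def)
  moreover have "weight_set (lift_graph G) \<subseteq> U" "weight_set (Lcon G S beta) \<subseteq> U"
    using assms(2,3) weight_set_Lcon_subset by (auto simp: weight_set_lift_graph)
  ultimately show ?thesis
    unfolding is_reduction_def is_expansion_def by (auto simp: card_verts_Lcon card_image)
qed

end
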